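(* Suppose $\mathcal{H}$ is a hereditary $3$-graph property and $\mathcal{B}_{\mathcal{H}}$ contains infinitely many pairwise non-isomorphic $3$-graphs. Then there is $C>0$ such that $\epsilon^{-C}\leq M_{\mathcal{H}}(\epsilon)$ for all sufficiently small $\epsilon>0$; moreover, whenever $M^{hom}_{\mathcal H}$ is defined, $M_{\mathcal{H}}(\epsilon)\leq M^{hom}_{\mathcal{H}}(\epsilon^4)$.
   Context: $3$-graphs $H=(V,E)$, $E\subseteq\binom V3$; hereditary $3$-graph properties are classes of finite $3$-graphs closed under isomorphism and induced sub-$3$-graphs. $d_H(X,Y,Z)=|\{(x,y,z)\in X\times Y\times Z:\{x,y,z\}\in E\}|/(|X||Y||Z|)$. A triple is $\epsilon$-regular if $|d_H(X,Y,Z)-d_H(X',Y',Z')|\le\epsilon$ for all $X'\subseteq X,Y'\subseteq Y,Z'\subseteq Z$ of sizes at least $\epsilon|X|,\epsilon|Y|,\epsilon|Z|$; $\epsilon$-homogeneous if $d_H(X,Y,Z)\in[0,\epsilon)\cup(1-\epsilon,1]$. A partition $\mathcal P$ of $V$ is $\epsilon$-regular (resp. homogeneous) if at least $(1-\epsilon)|V|^3$ triples of $V^3$ lie in $X\times Y\times Z$ for an $\epsilon$-regular (resp. $\epsilon$-homogeneous) $(X,Y,Z)\in\mathcal P^3$. $M_{\mathcal H}(\epsilon)$ (resp. $M^{hom}_{\mathcal H}(\epsilon)$) is the least $M$ such that all sufficiently large members of $\mathcal H$ have an $\epsilon$-regular (resp. $\epsilon$-homogeneous) partition with at most $M$ parts;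 $M^{hom}_{\mathcal H}$ is defined if such $M$ exists for all $\epsilon$. For a $3$-graph $G=(V,E)$, $x\sim_G y$ means: for all $z_1,z_2\in V\setminus\{x,y\}$, $xz_1z_2\in E$ iff $yz_1z_2\in E$ (an equivalence relation); $G$ is irreducible if every $\sim_G$-class has size $1$ or $2$. For a $3$-graph $G=(U,E)$ and $n\ge1$, an $n$-blowup of $G$ is a $3$-graph with vertex set $\bigcup_{u\in U}V_u$, disjoint $|V_u|=n$, in which for distinct $u_1,u_2,u_3$ every triple $\{x_1,x_2,x_3\}$ with $x_i\in V_{u_i}$ is an edge if $u_1u_2u_3\in E$ and is a non-edge otherwise (triples meeting some $V_u$ twice are arbitrary). $\mathcal B_{\mathcal H}$ is the class of irreducible $3$-graphs $G$ such that for every $n\ge1$, some $n$-blowup of $G$ lies in $\mathcal H$. *)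

theory Defs
  imports Complex_Main
begin

text \<open>A 3-graph is a pair (V, E) of a finite vertex set and a set of 3-element subsets.
  Vertices are natural numbers (every finite 3-graph is isomorphic to one on nat).\<close>

type_synonym hg = "nat set \<times> nat set set"

definition verts :: "hg \<Rightarrow> nat set" where "verts G = fst G"
definition edges :: "hg \<Rightarrow> nat set set" where "edges G = snd G"

definition is_3graph :: "hg \<Rightarrow> bool" where
  "is_3graph G \<longleftrightarrow> finite (verts G) \<and> (\<forall>e\<in>edges G. e \<subseteq> verts G \<and> card e = 3)"

definition hg_iso :: "hg \<Rightarrow> hg \<Rightarrow> bool" where
  "hg_iso G G' \<longleftrightarrow> (\<exists>f. bij_betw f (verts G) (verts G') \<and>
      (\<forall>e. e \<subseteq> verts G \<longrightarrow> (e \<in> edges G \<longleftrightarrow> f ` e \<in> edges G')))"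

definition induced_sub :: "hg \<Rightarrow> nat set \<Rightarrow> hg" where
  "induced_sub G W = (W, {e \<in> edges G. e \<subseteq> W})"

definition hereditary :: "hg set \<Rightarrow> bool" where
  "hereditary H \<longleftrightarrow> (\<forall>G\<in>H. is_3graph G) \<and>
     (\<forall>G\<in>H. \<forall>G'. is_3graph G' \<and> hg_iso G G' \<longrightarrow> G' \<in> H) \<and>
     (\<forall>G\<in>H. \<forall>W. W \<subseteq> verts G \<longrightarrow> induced_sub G W \<in> H)"

definition density :: "hg \<Rightarrow> nat set \<Rightarrow> nat set \<Rightarrow> nat set \<Rightarrow> real" where
  "density G X Y Z =
     real (card {(x,y,z). x \<in> X \<and> y \<in> Y \<and> z \<in> Z \<and> {x,y,z} \<in> edges G})
     / (real (card X) * real (card Y) * real (card Z))"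

definition eps_regular_triple :: "hg \<Rightarrow> real \<Rightarrow> nat set \<Rightarrow> nat set \<Rightarrow> nat set \<Rightarrow> bool" where
  "eps_regular_triple G \<epsilon> X Y Z \<longleftrightarrow>
     (\<forall>X' Y' Z'. X' \<subseteq> X \<and> Y' \<subseteq> Y \<and> Z' \<subseteq> Z \<and>
        real (card X') \<ge> \<epsilon> * real (card X) \<and> real (card Y') \<ge> \<epsilon> * real (card Y) \<and>
        real (card Z') \<ge> \<epsilon> * real (card Z) \<longrightarrow>
        \<bar>density G X Y Z - density G X' Y' Z'\<bar> \<le> \<epsilon>)"

definition eps_homogeneous_triple :: "hg \<Rightarrow> real \<Rightarrow> nat set \<Rightarrow> nat set \<Rightarrow> nat set \<Rightarrow> bool" where
  "eps_homogeneous_triple G \<epsilon> X Y Z \<longleftrightarrow>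
     (let d = density G X Y Z in (0 \<le> d \<and> d < \<epsilon>) \<or> (1 - \<epsilon> < d \<and> d \<le> 1))"

definition is_partition :: "nat set set \<Rightarrow> nat set \<Rightarrow> bool" where
  "is_partition P V \<longleftrightarrow> \<Union>P = V \<and> {} \<notin> P \<and>
     (\<forall>A\<in>P. \<forall>B\<in>P. A \<noteq> B \<longrightarrow> A \<inter> B = {})"

definition good_partition ::
  "(nat set \<Rightarrow> nat set \<Rightarrow> nat set \<Rightarrow> bool) \<Rightarrow> hg \<Rightarrow> real \<Rightarrow> nat set set \<Rightarrow> bool" where
  "good_partition Q G \<epsilon> P \<longleftrightarrow>
     real (card {(x,y,z). \<exists>X\<in>P. \<exists>Y\<in>P. \<exists>Z\<in>P. Q X Y Z \<and> x \<in> X \<and> y \<in> Y \<and> z \<in> Z})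
       \<ge> (1 - \<epsilon>) * real (card (verts G)) ^ 3"

definition eps_regular_partition :: "hg \<Rightarrow> real \<Rightarrow> nat set set \<Rightarrow> bool" where
  "eps_regular_partition G \<epsilon> P \<longleftrightarrow> good_partition (eps_regular_triple G \<epsilon>) G \<epsilon> P"

definition eps_homogeneous_partition :: "hg \<Rightarrow> real \<Rightarrow> nat set set \<Rightarrow> bool" where
  "eps_homogeneous_partition G \<epsilon> P \<longleftrightarrow> good_partition (eps_homogeneous_triple G \<epsilon>) G \<epsilon> P"

definition bound_works :: "(hg \<Rightarrow> real \<Rightarrow> nat set set \<Rightarrow> bool) \<Rightarrow> hg set \<Rightarrow> real \<Rightarrow> nat \<Rightarrow> bool" where
  "bound_works R H \<epsilon> M \<longleftrightarrow> (\<exists>N. \<forall>G\<in>H. card (verts G) \<ge> N \<longrightarrow>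
      (\<exists>P. is_partition P (verts G) \<and> card P \<le> M \<and> R G \<epsilon> P))"

definition M_reg :: "hg set \<Rightarrow> real \<Rightarrow> nat" where
  "M_reg H \<epsilon> = (LEAST M. bound_works eps_regular_partition H \<epsilon> M)"

definition M_hom :: "hg set \<Rightarrow> real \<Rightarrow> nat" where
  "M_hom H \<epsilon> = (LEAST M. bound_works eps_homogeneous_partition H \<epsilon> M)"

definition M_hom_defined :: "hg set \<Rightarrow> bool" where
  "M_hom_defined H \<longleftrightarrow> (\<forall>\<epsilon>>0. \<exists>M. bound_works eps_homogeneous_partition H \<epsilon> M)"

definition hg_equiv :: "hg \<Rightarrow> nat \<Rightarrow> nat \<Rightarrow> bool" where
  "hg_equiv G x y \<longleftrightarrow> (\<forall>z1\<in>verts G - {x,y}. \<forall>z2\<in>verts G - {x,y}.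
      {x,z1,z2} \<in> edges G \<longleftrightarrow> {y,z1,z2} \<in> edges G)"

definition irreducible :: "hg \<Rightarrow> bool" where
  "irreducible G \<longleftrightarrow> (\<forall>x\<in>verts G. card {y \<in> verts G. hg_equiv G x y} \<le> 2)"

text \<open>B is an n-blowup of G: f maps each vertex of B to the part V_u containing it.\<close>
definition is_blowup :: "nat \<Rightarrow> hg \<Rightarrow> hg \<Rightarrow> bool" where
  "is_blowup n G B \<longleftrightarrow> is_3graph B \<and> (\<exists>f. f ` verts B \<subseteq> verts G \<and>
      (\<forall>u\<in>verts G. card {x \<in> verts B. f x = u} = n) \<and>
      (\<forall>x1\<in>verts B. \<forall>x2\<in>verts B. \<forall>x3\<in>verts B.
         f x1 \<noteq> f x2 \<and> f x1 \<noteq> f x3 \<and> f x2 \<noteq> f x3 \<longrightarrow>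
         ({x1,x2,x3} \<in> edges B \<longleftrightarrow> {f x1, f x2, f x3} \<in> edges G)))"

definition B_set :: "hg set \<Rightarrow> hg set" where
  "B_set H = {G. is_3graph G \<and> irreducible G \<and> (\<forall>n\<ge>1. \<exists>B\<in>H. is_blowup n G B)}"

end

theory Submission
  imports Defs
begin

text \<open>
  An \<open>\<epsilon>\<^sup>4\<close>-homogeneous triple of parts is \<open>\<epsilon>\<close>-regular: on a sub-box of relative volume at
  least \<open>\<epsilon>\<^sup>3\<close> the density can move by at most \<open>\<epsilon>\<^sup>4 / \<epsilon>\<^sup>3 = \<epsilon>\<close>.

  For the lower bound, \<open>M_reg(\<epsilon>)\<close> is attained by the weak regularity lemma, proved by energy
  increment: refining by the witnesses of irregularity raises the mean square density by
  \<open>\<epsilon>\<^sup>6|V|\<^sup>3\<close>, which stays below \<open>|V|\<^sup>3\<close>. Now let \<open>K \<approx> \<epsilon> powr (-1/20)\<close>, take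
  \<open>G \<in> \<B>\<^sub>H\<close> with \<open>2K\<close> vertices \<open>A\<close>, add to \<open>A\<close> a pair of vertices separating every
  non-equivalent pair of \<open>A\<close>, obtaining \<open>U\<close> with \<open>|U| = O(K\<^sup>2)\<close>, and blow \<open>G[U]\<close> up inside
  \<open>H\<close>. In an \<open>\<epsilon>\<close>-regular partition with \<open>k < K\<close> parts every fibre has a part holding a
  \<open>1/k\<close> share of it. If non-equivalent \<open>a, b\<close> had the same such part, the separating pair would
  give sub-boxes of density 1 and 0 inside a triple of parts whose volume \<open>(n/k)\<^sup>3\<close> is too large
  for an irregular triple. So equal parts force equivalence, and irreducibility (classes of size
  at most 2) gives \<open>2K \<le> 2k\<close>, a contradiction.
\<close>

section \<open>Weighted Cauchy--Schwarz\<close>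

lemma weighted_square_sum_expand:
  fixes a w :: "'i \<Rightarrow> real"
  assumes "\<forall>i\<in>I. w i > 0"
  shows "(\<Sum>i\<in>I. (a i - t * w i)^2 / w i)
       = (\<Sum>i\<in>I. a i ^ 2 / w i) - 2 * t * (\<Sum>i\<in>I. a i) + t^2 * (\<Sum>i\<in>I. w i)"
proof -
  have "(\<Sum>i\<in>I. (a i - t * w i)^2 / w i) = (\<Sum>i\<in>I. a i ^ 2 / w i - 2 * t * a i + t^2 * w i)"
    using assms by (intro sum.cong) (auto simp: field_simps power2_eq_square)
  then show ?thesis
    by (simp add: sum.distrib sum_subtractf sum_distrib_left)
qed

lemma cauchy_schwarz_weighted:
  fixes a w :: "'i \<Rightarrow> real"
  assumes "finite I" "I \<noteq> {}" "\<forall>i\<in>I. w i > 0"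
  shows "(\<Sum>i\<in>I. a i)^2 / (\<Sum>i\<in>I. w i) \<le> (\<Sum>i\<in>I. a i ^ 2 / w i)"
proof -
  define A where "A = (\<Sum>i\<in>I. a i)"
  define W where "W = (\<Sum>i\<in>I. w i)"
  have "W > 0" unfolding W_def using assms by (intro sum_pos) auto
  have "0 \<le> (\<Sum>i\<in>I. (a i - (A / W) * w i)^2 / w i)"
    using assms by (intro sum_nonneg) auto
  also have "\<dots> = (\<Sum>i\<in>I. a i ^ 2 / w i) - A^2 / W"
    using weighted_square_sum_expand[OF assms(3), of a "A / W"] \<open>W > 0\<close>
    unfolding A_def W_def by (simp add: field_simps power2_eq_square)
  finally show ?thesis unfolding A_def W_def by simp
qed

lemma cauchy_schwarz_weighted_defect:
  fixes a w :: "'i \<Rightarrow> real"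
  assumes "finite I" "\<forall>i\<in>I. w i > 0" "J \<subseteq> I" "J \<noteq> {}"
  shows "(\<Sum>i\<in>I. a i)^2 / (\<Sum>i\<in>I. w i)
       + (\<Sum>i\<in>J. w i) * ((\<Sum>i\<in>J. a i) / (\<Sum>i\<in>J. w i) - (\<Sum>i\<in>I. a i) / (\<Sum>i\<in>I. w i))^2
     \<le> (\<Sum>i\<in>I. a i ^ 2 / w i)"
proof -
  define A where "A = (\<Sum>i\<in>I. a i)"
  define W where "W = (\<Sum>i\<in>I. w i)"
  define AJ where "AJ = (\<Sum>i\<in>J. a i)"
  define WJ where "WJ = (\<Sum>i\<in>J. w i)"
  define d where "d = A / W"
  have "finite J" using assms finite_subset by blast
  have "W > 0" unfolding W_def using assms by (intro sum_pos) auto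
  have "WJ > 0" unfolding WJ_def using assms \<open>finite J\<close> by (intro sum_pos) auto
  have expand: "(\<Sum>i\<in>I. a i ^ 2 / w i) = (\<Sum>i\<in>I. (a i - d * w i)^2 / w i) + A^2 / W"
    using weighted_square_sum_expand[OF assms(2), of a d] \<open>W > 0\<close>
    unfolding A_def W_def d_def by (simp add: field_simps power2_eq_square)
  have "AJ - d * WJ = (\<Sum>i\<in>J. a i - d * w i)"
    unfolding AJ_def WJ_def by (simp add: sum_subtractf sum_distrib_left)
  moreover have "WJ * (AJ / WJ - d)^2 = (AJ - d * WJ)^2 / WJ"
    using \<open>WJ > 0\<close> by (simp add: field_simps power2_eq_square)
  ultimately have "WJ * (AJ / WJ - d)^2 = (\<Sum>i\<in>J. a i - d * w i)^2 / WJ"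
    by simp
  also have "\<dots> \<le> (\<Sum>i\<in>J. (a i - d * w i)^2 / w i)"
    unfolding WJ_def using assms by (intro cauchy_schwarz_weighted \<open>finite J\<close>) auto
  also have "\<dots> \<le> (\<Sum>i\<in>I. (a i - d * w i)^2 / w i)"
    using assms by (intro sum_mono2) auto
  finally show ?thesis
    using expand unfolding A_def W_def AJ_def WJ_def d_def by simp
qed

definition finite_partition :: "nat set set \<Rightarrow> nat set \<Rightarrow> bool" where
  "finite_partition P V \<longleftrightarrow> is_partition P V \<and> finite V"

lemma finite_partitionD:
  assumes "finite_partition P V"
  shows "finite V" "finite P" "\<Union>P = V" "\<And>A. A \<in> P \<Longrightarrow> A \<subseteq> V" "\<And>A. A \<in> P \<Longrightarrow> finite A"
    "\<And>A. A \<in> P \<Longrightarrow> A \<noteq> {}" "\<And>A B. A \<in> P \<Longrightarrow> B \<in> P \<Longrightarrow> A \<noteq> B \<Longrightarrow> A \<inter> B = {}"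
  using assms finite_UnionD[of P] finite_subset[of _ V]
  unfolding finite_partition_def is_partition_def by blast+

lemma finite_partition_part_eq:
  assumes "finite_partition P V" "A \<in> P" "B \<in> P" "x \<in> A" "x \<in> B"
  shows "A = B"
  using finite_partitionD(7)[OF assms(1-3)] assms(4,5) by blast

lemma finite_partition_singleton: "finite V \<Longrightarrow> V \<noteq> {} \<Longrightarrow> finite_partition {V} V"
  unfolding finite_partition_def is_partition_def by simp

lemma sum_finite_partition:
  assumes "finite_partition P V"
  shows "sum g V = (\<Sum>A\<in>P. sum g A)"
  using sum.Union_disjoint[of P g] finite_partitionD[OF assms] by (simp add: pairwise_def)

(* The hypotheses say that each S_j is the disjoint union of the sets F_j i; phrased as
   summation rules they cover both a partition of a set and a refinement of a partition. *)
lemma sum_regroup3: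
  fixes f :: "'a \<Rightarrow> 'b \<Rightarrow> 'c \<Rightarrow> 'z::comm_monoid_add"
  assumes "\<And>h :: 'a \<Rightarrow> 'z. sum h S1 = (\<Sum>i\<in>I1. sum h (F1 i))"
    and "\<And>h :: 'b \<Rightarrow> 'z. sum h S2 = (\<Sum>i\<in>I2. sum h (F2 i))"
    and "\<And>h :: 'c \<Rightarrow> 'z. sum h S3 = (\<Sum>i\<in>I3. sum h (F3 i))"
  shows "(\<Sum>a\<in>S1. \<Sum>b\<in>S2. \<Sum>c\<in>S3. f a b c)
       = (\<Sum>i\<in>I1. \<Sum>j\<in>I2. \<Sum>k\<in>I3. \<Sum>a\<in>F1 i. \<Sum>b\<in>F2 j. \<Sum>c\<in>F3 k. f a b c)"
proof -
  have "(\<Sum>a\<in>S1. \<Sum>b\<in>S2. \<Sum>c\<in>S3. f a b c)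
      = (\<Sum>i\<in>I1. \<Sum>a\<in>F1 i. \<Sum>j\<in>I2. \<Sum>b\<in>F2 j. \<Sum>k\<in>I3. \<Sum>c\<in>F3 k. f a b c)"
    unfolding assms(3) unfolding assms(2) unfolding assms(1) ..
  also have "\<dots> = (\<Sum>i\<in>I1. \<Sum>j\<in>I2. \<Sum>a\<in>F1 i. \<Sum>k\<in>I3. \<Sum>b\<in>F2 j. \<Sum>c\<in>F3 k. f a b c)"
    by (intro sum.cong refl, subst sum.swap) (intro sum.cong refl sum.swap)
  also have "\<dots> = (\<Sum>i\<in>I1. \<Sum>j\<in>I2. \<Sum>k\<in>I3. \<Sum>a\<in>F1 i. \<Sum>b\<in>F2 j. \<Sum>c\<in>F3 k. f a b c)"
    by (intro sum.cong refl sum.swap)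
  finally show ?thesis .
qed

definition edge_count :: "hg \<Rightarrow> nat set \<Rightarrow> nat set \<Rightarrow> nat set \<Rightarrow> real" where
  "edge_count G X Y Z = (\<Sum>x\<in>X. \<Sum>y\<in>Y. \<Sum>z\<in>Z. of_bool ({x, y, z} \<in> edges G))"

definition vol :: "nat set \<Rightarrow> nat set \<Rightarrow> nat set \<Rightarrow> real" where
  "vol X Y Z = real (card X) * real (card Y) * real (card Z)"

lemma sum_product3: "(\<Sum>(a, b, c)\<in>A \<times> B \<times> C. f a b c) = (\<Sum>a\<in>A. \<Sum>b\<in>B. \<Sum>c\<in>C. f a b c)"
  by (simp add: sum.cartesian_product)

lemma sum3_mono_sets:
  fixes f :: "'a \<Rightarrow> 'b \<Rightarrow> 'c \<Rightarrow> real"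
  assumes "finite X" "finite Y" "finite Z" "X' \<subseteq> X" "Y' \<subseteq> Y" "Z' \<subseteq> Z"
    and "\<And>x y z. x \<in> X \<Longrightarrow> y \<in> Y \<Longrightarrow> z \<in> Z \<Longrightarrow> 0 \<le> f x y z"
  shows "(\<Sum>x\<in>X'. \<Sum>y\<in>Y'. \<Sum>z\<in>Z'. f x y z) \<le> (\<Sum>x\<in>X. \<Sum>y\<in>Y. \<Sum>z\<in>Z. f x y z)"
proof -
  have "(\<Sum>(x, y, z)\<in>X' \<times> Y' \<times> Z'. f x y z) \<le> (\<Sum>(x, y, z)\<in>X \<times> Y \<times> Z. f x y z)"
    using assms by (intro sum_mono2) auto
  then show ?thesis by (simp only: sum_product3)
qed

lemma card_triples_eq_sum:
  assumes "finite X" "finite Y" "finite Z"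
  shows "real (card {(x, y, z). x \<in> X \<and> y \<in> Y \<and> z \<in> Z \<and> Q x y z})
       = (\<Sum>x\<in>X. \<Sum>y\<in>Y. \<Sum>z\<in>Z. of_bool (Q x y z))"
proof -
  have "{(x, y, z). x \<in> X \<and> y \<in> Y \<and> z \<in> Z \<and> Q x y z} = (SIGMA x:X. SIGMA y:Y. {z \<in> Z. Q x y z})"
    by auto
  moreover have "card (SIGMA x:X. SIGMA y:Y. {z \<in> Z. Q x y z}) = (\<Sum>x\<in>X. \<Sum>y\<in>Y. card {z \<in> Z. Q x y z})"
    using assms by (simp add: card_SigmaI)
  moreover have "\<And>x y. real (card {z \<in> Z. Q x y z}) = (\<Sum>z\<in>Z. of_bool (Q x y z))"
    using assms(3) by (simp add: Int_def conj_commute)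
  ultimately show ?thesis by simp
qed

lemma vol_eq_sum: "finite X \<Longrightarrow> finite Y \<Longrightarrow> finite Z \<Longrightarrow> vol X Y Z = (\<Sum>x\<in>X. \<Sum>y\<in>Y. \<Sum>z\<in>Z. 1)"
  unfolding vol_def by simp

lemma vol_pos: "finite X \<Longrightarrow> finite Y \<Longrightarrow> finite Z \<Longrightarrow> X \<noteq> {} \<Longrightarrow> Y \<noteq> {} \<Longrightarrow> Z \<noteq> {} \<Longrightarrow> vol X Y Z > 0"
  unfolding vol_def by (simp add: card_gt_0_iff)

lemma vol_ge_scaled:
  assumes "e * real (card X) \<le> real (card X')" "e * real (card Y) \<le> real (card Y')"
    "e * real (card Z) \<le> real (card Z')" "0 \<le> e"
  shows "e^3 * vol X Y Z \<le> vol X' Y' Z'"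
proof -
  have "e^3 * vol X Y Z = (e * real (card X)) * (e * real (card Y)) * (e * real (card Z))"
    unfolding vol_def by (simp add: power3_eq_cube mult_ac)
  also have "\<dots> \<le> vol X' Y' Z'"
    unfolding vol_def using assms by (intro mult_mono) auto
  finally show ?thesis .
qed

lemma density_eq_edge_count:
  assumes "finite X" "finite Y" "finite Z"
  shows "density G X Y Z = edge_count G X Y Z / vol X Y Z"
  unfolding density_def edge_count_def vol_def card_triples_eq_sum[OF assms] ..

lemma density_empty: "X = {} \<or> Y = {} \<or> Z = {} \<Longrightarrow> density G X Y Z = 0"
  unfolding density_def by auto

lemma edge_count_nonneg: "0 \<le> edge_count G X Y Z"
  unfolding edge_count_def by (intro sum_nonneg) simp

lemma edge_count_le_vol: "finite X \<Longrightarrow> finite Y \<Longrightarrow> finite Z \<Longrightarrow> edge_count G X Y Z \<le> vol X Y Z"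
  unfolding vol_eq_sum edge_count_def by (intro sum_mono) simp

lemma vol_nonneg: "0 \<le> vol X Y Z"
  unfolding vol_def by simp

lemma density_nonneg: "0 \<le> density G X Y Z"
  unfolding density_def by simp

lemma density_le_1: "finite X \<Longrightarrow> finite Y \<Longrightarrow> finite Z \<Longrightarrow> density G X Y Z \<le> 1"
  using edge_count_le_vol[of X Y Z G] edge_count_nonneg[of G X Y Z] vol_nonneg[of X Y Z]
  by (cases "vol X Y Z = 0") (simp_all add: density_eq_edge_count divide_le_eq_1)

lemma edge_count_mono:
  assumes "finite X" "finite Y" "finite Z" "X' \<subseteq> X" "Y' \<subseteq> Y" "Z' \<subseteq> Z"
  shows "edge_count G X' Y' Z' \<le> edge_count G X Y Z"
  unfolding edge_count_def by (rule sum3_mono_sets[OF assms]) simp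

lemma non_edge_count_mono:
  assumes "finite X" "finite Y" "finite Z" "X' \<subseteq> X" "Y' \<subseteq> Y" "Z' \<subseteq> Z"
  shows "vol X' Y' Z' - edge_count G X' Y' Z' \<le> vol X Y Z - edge_count G X Y Z"
proof -
  have "finite X'" "finite Y'" "finite Z'"
    using assms finite_subset by blast+
  moreover have "(\<Sum>x\<in>X'. \<Sum>y\<in>Y'. \<Sum>z\<in>Z'. 1 - of_bool ({x, y, z} \<in> edges G))
      \<le> (\<Sum>x\<in>X. \<Sum>y\<in>Y. \<Sum>z\<in>Z. 1 - of_bool ({x, y, z} \<in> edges G) :: real)"
    by (rule sum3_mono_sets[OF assms]) simp
  ultimately show ?thesis
    using assms unfolding vol_eq_sum[OF assms(1-3)] vol_eq_sum[OF \<open>finite X'\<close> \<open>finite Y'\<close> \<open>finite Z'\<close>] edge_count_def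
    by (simp only: sum_subtractf)
qed

lemma sum3_finite_partition:
  fixes f :: "nat \<Rightarrow> nat \<Rightarrow> nat \<Rightarrow> real"
  assumes "finite_partition FX X" "finite_partition FY Y" "finite_partition FZ Z"
  shows "(\<Sum>x\<in>X. \<Sum>y\<in>Y. \<Sum>z\<in>Z. f x y z) = (\<Sum>A\<in>FX. \<Sum>B\<in>FY. \<Sum>C\<in>FZ. \<Sum>x\<in>A. \<Sum>y\<in>B. \<Sum>z\<in>C. f x y z)"
  by (rule sum_regroup3) (rule sum_finite_partition, fact)+

lemma edge_count_finite_partition:
  assumes "finite_partition FX X" "finite_partition FY Y" "finite_partition FZ Z"
  shows "edge_count G X Y Z = (\<Sum>A\<in>FX. \<Sum>B\<in>FY. \<Sum>C\<in>FZ. edge_count G A B C)"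
  unfolding edge_count_def by (rule sum3_finite_partition[OF assms])

lemma vol_finite_partition:
  assumes "finite_partition FX X" "finite_partition FY Y" "finite_partition FZ Z"
  shows "vol X Y Z = (\<Sum>A\<in>FX. \<Sum>B\<in>FY. \<Sum>C\<in>FZ. vol A B C)"
  using sum3_finite_partition[OF assms, of "\<lambda>_ _ _. 1"]
    finite_partitionD(1,5)[OF assms(1)] finite_partitionD(1,5)[OF assms(2)] finite_partitionD(1,5)[OF assms(3)]
  by (simp add: vol_eq_sum)

lemma finite_partition_subfamily:
  assumes "finite_partition F X" "F' \<subseteq> F"
  shows "finite_partition F' (\<Union>F')"
proof -
  have "\<Union>F' \<subseteq> X"
    using finite_partitionD(3)[OF assms(1)] assms(2) by blast
  then have "finite (\<Union>F')"
    using finite_partitionD(1)[OF assms(1)] finite_subset by blast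
  moreover have "is_partition F' (\<Union>F')"
    using finite_partitionD(6,7)[OF assms(1)] assms(2) unfolding is_partition_def by blast
  ultimately show ?thesis
    unfolding finite_partition_def by blast
qed

section \<open>Irregular volume and energy\<close>

definition bad_volume :: "(nat set \<Rightarrow> nat set \<Rightarrow> nat set \<Rightarrow> bool) \<Rightarrow> nat set set \<Rightarrow> real" where
  "bad_volume Q P = (\<Sum>X\<in>P. \<Sum>Y\<in>P. \<Sum>Z\<in>P. if Q X Y Z then 0 else vol X Y Z)"

lemma card_covered_triples:
  assumes P: "finite_partition P V"
  shows "real (card {(x, y, z). \<exists>X\<in>P. \<exists>Y\<in>P. \<exists>Z\<in>P. Q X Y Z \<and> x \<in> X \<and> y \<in> Y \<and> z \<in> Z})
       = real (card V) ^ 3 - bad_volume Q P"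
proof -
  define cov where "cov x y z \<longleftrightarrow> (\<exists>X\<in>P. \<exists>Y\<in>P. \<exists>Z\<in>P. Q X Y Z \<and> x \<in> X \<and> y \<in> Y \<and> z \<in> Z)" for x y z
  have fin: "finite V" by (rule finite_partitionD(1)[OF P])
  have cov_in_part: "cov x y z \<longleftrightarrow> Q X Y Z"
    if "X \<in> P" "Y \<in> P" "Z \<in> P" "x \<in> X" "y \<in> Y" "z \<in> Z" for X Y Z x y z
    using that finite_partition_part_eq[OF P] unfolding cov_def by metis
  have "{(x, y, z). cov x y z} = {(x, y, z). x \<in> V \<and> y \<in> V \<and> z \<in> V \<and> cov x y z}"
    using finite_partitionD(4)[OF P] unfolding cov_def by blast
  then have "real (card {(x, y, z). cov x y z}) = (\<Sum>x\<in>V. \<Sum>y\<in>V. \<Sum>z\<in>V. of_bool (cov x y z))"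
    using card_triples_eq_sum[OF fin fin fin] by simp
  also have "\<dots> = (\<Sum>X\<in>P. \<Sum>Y\<in>P. \<Sum>Z\<in>P. \<Sum>x\<in>X. \<Sum>y\<in>Y. \<Sum>z\<in>Z. of_bool (cov x y z))"
    by (rule sum3_finite_partition[OF P P P])
  also have "\<dots> = (\<Sum>X\<in>P. \<Sum>Y\<in>P. \<Sum>Z\<in>P. if Q X Y Z then vol X Y Z else 0)"
    using cov_in_part finite_partitionD(5)[OF P] by (intro sum.cong refl) (simp add: vol_eq_sum)
  also have "\<dots> = (\<Sum>X\<in>P. \<Sum>Y\<in>P. \<Sum>Z\<in>P. vol X Y Z - (if Q X Y Z then 0 else vol X Y Z))"
    by (intro sum.cong refl) simp
  also have "\<dots> = (\<Sum>X\<in>P. \<Sum>Y\<in>P. \<Sum>Z\<in>P. vol X Y Z) - bad_volume Q P"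
    unfolding bad_volume_def by (simp only: sum_subtractf)
  also have "\<dots> = real (card V) ^ 3 - bad_volume Q P"
    using vol_finite_partition[OF P P P] by (simp add: vol_def power3_eq_cube)
  finally show ?thesis unfolding cov_def .
qed

lemma good_partition_iff_bad_volume:
  assumes "finite_partition P (verts G)"
  shows "good_partition Q G \<epsilon> P \<longleftrightarrow> bad_volume Q P \<le> \<epsilon> * real (card (verts G)) ^ 3"
  unfolding good_partition_def card_covered_triples[OF assms] by (simp add: algebra_simps)

lemma vol_le_bad_volume:
  assumes "finite P" "X \<in> P" "Y \<in> P" "Z \<in> P" "\<not> Q X Y Z"
  shows "vol X Y Z \<le> bad_volume Q P"
proof -
  let ?f = "\<lambda>(X, Y, Z). if Q X Y Z then 0 else vol X Y Z"
  have "?f (X, Y, Z) \<le> (\<Sum>t\<in>P \<times> P \<times> P. ?f t)"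
  proof (rule member_le_sum)
    show "0 \<le> ?f t" for t
      using vol_nonneg by (simp split: prod.splits)
  qed (use assms(1-4) in auto)
  then show ?thesis
    using assms(5) unfolding bad_volume_def sum_product3 by simp
qed

(* Equal to vol X Y Z times the squared density: the contribution of the cell X \<times> Y \<times> Z to
   the mean square density of a partition. *)
definition cell_energy :: "hg \<Rightarrow> nat set \<Rightarrow> nat set \<Rightarrow> nat set \<Rightarrow> real" where
  "cell_energy G X Y Z = edge_count G X Y Z ^ 2 / vol X Y Z"

definition energy :: "hg \<Rightarrow> nat set set \<Rightarrow> real" where
  "energy G P = (\<Sum>X\<in>P. \<Sum>Y\<in>P. \<Sum>Z\<in>P. cell_energy G X Y Z)"

lemma cell_energy_nonneg: "0 \<le> cell_energy G X Y Z"
  unfolding cell_energy_def using vol_nonneg by simp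

lemma energy_nonneg: "0 \<le> energy G P"
  unfolding energy_def by (intro sum_nonneg cell_energy_nonneg)

lemma cell_energy_le_vol:
  assumes "finite X" "finite Y" "finite Z"
  shows "cell_energy G X Y Z \<le> vol X Y Z"
proof (cases "vol X Y Z = 0")
  case False
  then have "0 < vol X Y Z" using vol_nonneg[of X Y Z] by simp
  moreover have "edge_count G X Y Z ^ 2 \<le> vol X Y Z * vol X Y Z"
    unfolding power2_eq_square using edge_count_nonneg edge_count_le_vol[OF assms] vol_nonneg
    by (intro mult_mono) auto
  ultimately show ?thesis unfolding cell_energy_def by (simp add: divide_le_eq)
qed (simp add: cell_energy_def)

lemma energy_le_cube:
  assumes "finite_partition P V"
  shows "energy G P \<le> real (card V) ^ 3"
proof -
  have "energy G P \<le> (\<Sum>X\<in>P. \<Sum>Y\<in>P. \<Sum>Z\<in>P. vol X Y Z)"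
    unfolding energy_def using finite_partitionD(5)[OF assms]
    by (intro sum_mono cell_energy_le_vol) auto
  also have "\<dots> = real (card V) ^ 3"
    using vol_finite_partition[OF assms assms assms] by (simp add: vol_def power3_eq_cube)
  finally show ?thesis .
qed

lemma cell_energy_defect:
  assumes P: "finite_partition FX X" "finite_partition FY Y" "finite_partition FZ Z"
    and sub: "FX' \<subseteq> FX" "FY' \<subseteq> FY" "FZ' \<subseteq> FZ" and ne: "FX' \<noteq> {}" "FY' \<noteq> {}" "FZ' \<noteq> {}"
  shows "cell_energy G X Y Z
       + vol (\<Union>FX') (\<Union>FY') (\<Union>FZ') * (density G (\<Union>FX') (\<Union>FY') (\<Union>FZ') - density G X Y Z)^2
     \<le> (\<Sum>A\<in>FX. \<Sum>B\<in>FY. \<Sum>C\<in>FZ. cell_energy G A B C)"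
proof -
  let ?I = "FX \<times> FY \<times> FZ" and ?J = "FX' \<times> FY' \<times> FZ'"
  let ?a = "\<lambda>(A, B, C). edge_count G A B C" and ?w = "\<lambda>(A, B, C). vol A B C"
  have P': "finite_partition FX' (\<Union>FX')" "finite_partition FY' (\<Union>FY')" "finite_partition FZ' (\<Union>FZ')"
    using finite_partition_subfamily P sub by blast+
  have "finite ?I" using finite_partitionD(2) P by blast
  moreover have "\<forall>i\<in>?I. ?w i > 0"
    using finite_partitionD(5,6)[OF P(1)] finite_partitionD(5,6)[OF P(2)] finite_partitionD(5,6)[OF P(3)]
    by (clarsimp, intro vol_pos) blast+
  moreover have "?J \<subseteq> ?I" "?J \<noteq> {}" using sub ne by auto
  ultimately have "(\<Sum>i\<in>?I. ?a i)^2 / (\<Sum>i\<in>?I. ?w i)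
      + (\<Sum>i\<in>?J. ?w i) * ((\<Sum>i\<in>?J. ?a i) / (\<Sum>i\<in>?J. ?w i) - (\<Sum>i\<in>?I. ?a i) / (\<Sum>i\<in>?I. ?w i))^2
     \<le> (\<Sum>i\<in>?I. ?a i ^ 2 / ?w i)"
    by (rule cauchy_schwarz_weighted_defect)
  moreover have "(\<Sum>i\<in>?I. ?a i) = edge_count G X Y Z" "(\<Sum>i\<in>?I. ?w i) = vol X Y Z"
    "(\<Sum>i\<in>?J. ?a i) = edge_count G (\<Union>FX') (\<Union>FY') (\<Union>FZ')" "(\<Sum>i\<in>?J. ?w i) = vol (\<Union>FX') (\<Union>FY') (\<Union>FZ')"
    by (simp_all only: sum_product3 edge_count_finite_partition[OF P] vol_finite_partition[OF P]
        edge_count_finite_partition[OF P'] vol_finite_partition[OF P'])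
  moreover have "(\<Sum>i\<in>?I. ?a i ^ 2 / ?w i) = (\<Sum>A\<in>FX. \<Sum>B\<in>FY. \<Sum>C\<in>FZ. cell_energy G A B C)"
    unfolding sum_product3[symmetric] cell_energy_def by (intro sum.cong) auto
  ultimately show ?thesis
    using finite_partitionD(1) P P' by (simp add: cell_energy_def density_eq_edge_count)
qed

lemma cell_energy_le_sum:
  assumes P: "finite_partition FX X" "finite_partition FY Y" "finite_partition FZ Z"
  shows "cell_energy G X Y Z \<le> (\<Sum>A\<in>FX. \<Sum>B\<in>FY. \<Sum>C\<in>FZ. cell_energy G A B C)"
proof (cases "FX = {} \<or> FY = {} \<or> FZ = {}")
  case True
  then have "X = {} \<or> Y = {} \<or> Z = {}"
    using finite_partitionD(3) P by auto
  then show ?thesis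
    unfolding cell_energy_def vol_def by (auto intro!: sum_nonneg simp: vol_def)
next
  case False
  then show ?thesis
    using cell_energy_defect[OF P subset_refl subset_refl subset_refl, of G] vol_nonneg[of "\<Union>FX" "\<Union>FY" "\<Union>FZ"]
    by (smt (verit) mult_nonneg_nonneg zero_le_power2)
qed

definition irregularity_witness ::
  "hg \<Rightarrow> real \<Rightarrow> nat set \<Rightarrow> nat set \<Rightarrow> nat set \<Rightarrow> nat set \<Rightarrow> nat set \<Rightarrow> nat set \<Rightarrow> bool" where
  "irregularity_witness G \<epsilon> X Y Z X' Y' Z' \<longleftrightarrow> X' \<subseteq> X \<and> Y' \<subseteq> Y \<and> Z' \<subseteq> Z
     \<and> \<epsilon> * real (card X) \<le> real (card X') \<and> \<epsilon> * real (card Y) \<le> real (card Y')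
     \<and> \<epsilon> * real (card Z) \<le> real (card Z') \<and> \<epsilon> < \<bar>density G X Y Z - density G X' Y' Z'\<bar>"

lemma not_eps_regular_triple_iff:
  "\<not> eps_regular_triple G \<epsilon> X Y Z \<longleftrightarrow> (\<exists>X' Y' Z'. irregularity_witness G \<epsilon> X Y Z X' Y' Z')"
  unfolding eps_regular_triple_def irregularity_witness_def by (meson not_le)

lemma cell_energy_gain_irregular:
  assumes P: "finite_partition FX X" "finite_partition FY Y" "finite_partition FZ Z"
    and sub: "FX' \<subseteq> FX" "FY' \<subseteq> FY" "FZ' \<subseteq> FZ"
    and witness: "irregularity_witness G \<epsilon> X Y Z (\<Union>FX') (\<Union>FY') (\<Union>FZ')" and "\<epsilon> > 0"
  shows "cell_energy G X Y Z + \<epsilon>^5 * vol X Y Z \<le> (\<Sum>A\<in>FX. \<Sum>B\<in>FY. \<Sum>C\<in>FZ. cell_energy G A B C)"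
proof -
  have large: "\<epsilon> * real (card X) \<le> real (card (\<Union>FX'))" "\<epsilon> * real (card Y) \<le> real (card (\<Union>FY'))"
      "\<epsilon> * real (card Z) \<le> real (card (\<Union>FZ'))"
    and gap: "\<epsilon> < \<bar>density G X Y Z - density G (\<Union>FX') (\<Union>FY') (\<Union>FZ')\<bar>"
    using witness unfolding irregularity_witness_def by blast+
  have "\<Union>FX' \<subseteq> X" "\<Union>FY' \<subseteq> Y" "\<Union>FZ' \<subseteq> Z"
    using finite_partitionD(3) P sub by blast+
  then have "X \<noteq> {} \<and> Y \<noteq> {} \<and> Z \<noteq> {}"
    using gap \<open>\<epsilon> > 0\<close> density_empty[of X Y Z G] density_empty[of "\<Union>FX'" "\<Union>FY'" "\<Union>FZ'" G]
    by auto
  have large_nonempty: "S \<noteq> {}" if "\<epsilon> * real (card T) \<le> real (card S)" "T \<noteq> {}" "finite T" for S T :: "nat set"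
  proof
    assume "S = {}"
    then have "real (card T) \<le> 0"
      using that(1) \<open>\<epsilon> > 0\<close> by (simp add: mult_le_0_iff)
    then show False
      using that(2,3) by simp
  qed
  have "\<Union>FX' \<noteq> {} \<and> \<Union>FY' \<noteq> {} \<and> \<Union>FZ' \<noteq> {}"
    using large_nonempty[OF large(1)] large_nonempty[OF large(2)] large_nonempty[OF large(3)]
      \<open>X \<noteq> {} \<and> Y \<noteq> {} \<and> Z \<noteq> {}\<close> finite_partitionD(1) P by blast
  then have ne: "FX' \<noteq> {}" "FY' \<noteq> {}" "FZ' \<noteq> {}" by auto
  have "\<epsilon>^2 \<le> \<bar>density G X Y Z - density G (\<Union>FX') (\<Union>FY') (\<Union>FZ')\<bar>^2"
    using gap \<open>\<epsilon> > 0\<close> by (intro power_mono) auto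
  then have "\<epsilon>^2 \<le> (density G (\<Union>FX') (\<Union>FY') (\<Union>FZ') - density G X Y Z)^2"
    by (simp add: power2_commute)
  moreover have "\<epsilon>^3 * vol X Y Z \<le> vol (\<Union>FX') (\<Union>FY') (\<Union>FZ')"
    using vol_ge_scaled[OF large] \<open>\<epsilon> > 0\<close> by simp
  ultimately have "\<epsilon>^3 * vol X Y Z * \<epsilon>^2
      \<le> vol (\<Union>FX') (\<Union>FY') (\<Union>FZ') * (density G (\<Union>FX') (\<Union>FY') (\<Union>FZ') - density G X Y Z)^2"
    using \<open>\<epsilon> > 0\<close> vol_nonneg by (intro mult_mono) auto
  then show ?thesis
    using cell_energy_defect[OF P sub ne, of G] by (simp add: power_add[symmetric] mult_ac eval_nat_numeral)
qed

section \<open>The weak regularity lemma\<close>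

definition atoms :: "nat set \<Rightarrow> nat set set \<Rightarrow> nat set set" where
  "atoms V Fs = (\<lambda>x. {y \<in> V. \<forall>W\<in>Fs. y \<in> W \<longleftrightarrow> x \<in> W}) ` V"

lemma finite_partition_atoms:
  assumes "finite V"
  shows "finite_partition (atoms V Fs) V"
proof -
  let ?atom = "\<lambda>x. {y \<in> V. \<forall>W\<in>Fs. y \<in> W \<longleftrightarrow> x \<in> W}"
  have "?atom x = ?atom x'" if "y \<in> ?atom x" "y \<in> ?atom x'" for x x' y
    using that by auto
  then have "A \<inter> B = {}" if "A \<in> atoms V Fs" "B \<in> atoms V Fs" "A \<noteq> B" for A B
    using that unfolding atoms_def by blast
  moreover have "\<Union>(atoms V Fs) = V" "{} \<notin> atoms V Fs"
    unfolding atoms_def by blast+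
  ultimately show ?thesis
    using assms unfolding finite_partition_def is_partition_def by blast
qed

lemma card_atoms_le:
  assumes "finite Fs"
  shows "card (atoms V Fs) \<le> 2 ^ card Fs"
proof -
  let ?sig = "\<lambda>x. {W \<in> Fs. x \<in> W}"
  have "atoms V Fs = (\<lambda>S. {y \<in> V. ?sig y = S}) ` (?sig ` V)"
    unfolding atoms_def image_image by (intro image_cong refl) auto
  moreover have "finite (?sig ` V)"
    by (rule finite_subset[of _ "Pow Fs"]) (use assms in auto)
  ultimately have "card (atoms V Fs) \<le> card (?sig ` V)"
    using card_image_le by simp
  also have "\<dots> \<le> card (Pow Fs)"
    using assms by (intro card_mono) auto
  finally show ?thesis
    using assms by (simp add: card_Pow)
qed

lemma atom_subset_or_disjoint: "A \<in> atoms V Fs \<Longrightarrow> W \<in> Fs \<Longrightarrow> A \<subseteq> W \<or> A \<inter> W = {}"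
  unfolding atoms_def by auto

lemma Union_atoms_subset:
  assumes "W \<in> Fs" "W \<subseteq> V"
  shows "\<Union>{A \<in> atoms V Fs. A \<subseteq> W} = W"
proof
  show "W \<subseteq> \<Union>{A \<in> atoms V Fs. A \<subseteq> W}"
  proof
    fix x assume "x \<in> W"
    then have "{y \<in> V. \<forall>W\<in>Fs. y \<in> W \<longleftrightarrow> x \<in> W} \<in> {A \<in> atoms V Fs. A \<subseteq> W}"
      using assms unfolding atoms_def by auto
    then show "x \<in> \<Union>{A \<in> atoms V Fs. A \<subseteq> W}"
      using \<open>x \<in> W\<close> assms by blast
  qed
qed blast

definition refines :: "nat set set \<Rightarrow> nat set set \<Rightarrow> bool" where
  "refines Q P \<longleftrightarrow> (\<forall>A\<in>Q. \<exists>X\<in>P. A \<subseteq> X)"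

lemma refines_atoms:
  assumes "finite_partition P V" "P \<subseteq> Fs"
  shows "refines (atoms V Fs) P"
  unfolding refines_def
proof
  fix A assume A: "A \<in> atoms V Fs"
  then obtain x where "x \<in> V" "x \<in> A"
    unfolding atoms_def by blast
  then obtain X where "X \<in> P" "x \<in> X"
    using finite_partitionD(3)[OF assms(1)] by blast
  then show "\<exists>X\<in>P. A \<subseteq> X"
    using atom_subset_or_disjoint[OF A, of X] assms(2) \<open>x \<in> A\<close> by blast
qed

lemma finite_partition_pieces:
  assumes P: "finite_partition P V" and Q: "finite_partition Q V" and "refines Q P" "X \<in> P"
  shows "finite_partition {A \<in> Q. A \<subseteq> X} X"
proof -
  have "X \<subseteq> \<Union>{A \<in> Q. A \<subseteq> X}"
  proof
    fix x assume "x \<in> X"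
    then obtain A where "A \<in> Q" "x \<in> A"
      using finite_partitionD(3,4)[OF P] finite_partitionD(3)[OF Q] \<open>X \<in> P\<close> by blast
    moreover obtain X' where "X' \<in> P" "A \<subseteq> X'"
      using \<open>refines Q P\<close> \<open>A \<in> Q\<close> unfolding refines_def by blast
    ultimately show "x \<in> \<Union>{A \<in> Q. A \<subseteq> X}"
      using finite_partition_part_eq[OF P \<open>X \<in> P\<close> \<open>X' \<in> P\<close> \<open>x \<in> X\<close>] by blast
  qed
  then have "\<Union>{A \<in> Q. A \<subseteq> X} = X" by blast
  then show ?thesis
    using finite_partition_subfamily[OF Q, of "{A \<in> Q. A \<subseteq> X}"] by simp
qed

lemma sum_refines:
  assumes P: "finite_partition P V" and Q: "finite_partition Q V" and "refines Q P"
  shows "sum h Q = (\<Sum>X\<in>P. sum h {A \<in> Q. A \<subseteq> X})"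
proof -
  have "Q = (\<Union>X\<in>P. {A \<in> Q. A \<subseteq> X})"
    using \<open>refines Q P\<close> unfolding refines_def by blast
  moreover have "{A \<in> Q. A \<subseteq> X} \<inter> {A \<in> Q. A \<subseteq> Y} = {}" if "X \<in> P" "Y \<in> P" "X \<noteq> Y" for X Y
    using finite_partitionD(6)[OF Q] finite_partitionD(7)[OF P that] by blast
  then have "sum h (\<Union>X\<in>P. {A \<in> Q. A \<subseteq> X}) = (\<Sum>X\<in>P. sum h {A \<in> Q. A \<subseteq> X})"
    using finite_partitionD(2)[OF P] finite_partitionD(2)[OF Q] by (intro sum.UNION_disjoint) auto
  ultimately show ?thesis by simp
qed

lemma energy_refines:
  assumes "finite_partition P V" "finite_partition Q V" "refines Q P"
  shows "energy G Q = (\<Sum>X\<in>P. \<Sum>Y\<in>P. \<Sum>Z\<in>P.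
           \<Sum>A\<in>{A \<in> Q. A \<subseteq> X}. \<Sum>B\<in>{B \<in> Q. B \<subseteq> Y}. \<Sum>C\<in>{C \<in> Q. C \<subseteq> Z}. cell_energy G A B C)"
  unfolding energy_def by (rule sum_regroup3) (rule sum_refines[OF assms])+

lemma energy_refinement_gain:
  assumes P: "finite_partition P V" and Q: "finite_partition Q V" "refines Q P" and "\<epsilon> > 0"
    and witness: "\<And>X Y Z. X \<in> P \<Longrightarrow> Y \<in> P \<Longrightarrow> Z \<in> P \<Longrightarrow> \<not> eps_regular_triple G \<epsilon> X Y Z \<Longrightarrow>
      \<exists>X' Y' Z'. irregularity_witness G \<epsilon> X Y Z X' Y' Z'
        \<and> \<Union>{A \<in> Q. A \<subseteq> X'} = X' \<and> \<Union>{A \<in> Q. A \<subseteq> Y'} = Y' \<and> \<Union>{A \<in> Q. A \<subseteq> Z'} = Z'"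
  shows "energy G P + \<epsilon>^5 * bad_volume (eps_regular_triple G \<epsilon>) P \<le> energy G Q"
proof -
  let ?pieces = "\<lambda>X. {A \<in> Q. A \<subseteq> X}"
  have cell_gain: "cell_energy G X Y Z + \<epsilon>^5 * (if eps_regular_triple G \<epsilon> X Y Z then 0 else vol X Y Z)
      \<le> (\<Sum>A\<in>?pieces X. \<Sum>B\<in>?pieces Y. \<Sum>C\<in>?pieces Z. cell_energy G A B C)"
    if XYZ: "X \<in> P" "Y \<in> P" "Z \<in> P" for X Y Z
  proof -
    have parts: "finite_partition (?pieces X) X" "finite_partition (?pieces Y) Y" "finite_partition (?pieces Z) Z"
      using finite_partition_pieces[OF P Q] that by blast+
    show ?thesis
    proof (cases "eps_regular_triple G \<epsilon> X Y Z")
      case True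
      then show ?thesis using cell_energy_le_sum[OF parts] by simp
    next
      case False
      obtain X' Y' Z' where wit: "irregularity_witness G \<epsilon> X Y Z X' Y' Z'"
        and unions: "\<Union>{A \<in> Q. A \<subseteq> X'} = X'" "\<Union>{A \<in> Q. A \<subseteq> Y'} = Y'" "\<Union>{A \<in> Q. A \<subseteq> Z'} = Z'"
        using witness[OF XYZ False] by (elim exE conjE) (rule that)
      have "{A \<in> Q. A \<subseteq> X'} \<subseteq> ?pieces X" "{A \<in> Q. A \<subseteq> Y'} \<subseteq> ?pieces Y" "{A \<in> Q. A \<subseteq> Z'} \<subseteq> ?pieces Z"
        using wit unfolding irregularity_witness_def by blast+
      from cell_energy_gain_irregular[OF parts this, unfolded unions, OF wit \<open>\<epsilon> > 0\<close>] False show ?thesis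
        by simp
    qed
  qed
  have "energy G P + \<epsilon>^5 * bad_volume (eps_regular_triple G \<epsilon>) P
      = (\<Sum>X\<in>P. \<Sum>Y\<in>P. \<Sum>Z\<in>P. cell_energy G X Y Z
           + \<epsilon>^5 * (if eps_regular_triple G \<epsilon> X Y Z then 0 else vol X Y Z))"
    unfolding energy_def bad_volume_def by (simp add: sum.distrib sum_distrib_left)
  also have "\<dots> \<le> energy G Q"
    unfolding energy_refines[OF P Q] using cell_gain by (intro sum_mono) auto
  finally show ?thesis .
qed

lemma card_UN3_le:
  assumes "finite P"
  shows "card (\<Union>X\<in>P. \<Union>Y\<in>P. \<Union>Z\<in>P. {f X Y Z, g X Y Z, h X Y Z}) \<le> 3 * card P ^ 3"
proof -
  have "card (\<Union>X\<in>P. \<Union>Y\<in>P. \<Union>Z\<in>P. {f X Y Z, g X Y Z, h X Y Z})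
      \<le> (\<Sum>X\<in>P. \<Sum>Y\<in>P. \<Sum>Z\<in>P. card {f X Y Z, g X Y Z, h X Y Z})"
    using assms by (intro order_trans[OF card_UN_le] sum_mono) auto
  also have "\<dots> \<le> (\<Sum>X\<in>P. \<Sum>Y\<in>P. \<Sum>Z\<in>P. 3)"
    by (intro sum_mono) (simp add: card_insert_le_m1)
  finally show ?thesis
    by (simp add: power3_eq_cube)
qed

lemma energy_increment:
  assumes P: "finite_partition P (verts G)" and "\<epsilon> > 0" and not_regular: "\<not> eps_regular_partition G \<epsilon> P"
  shows "\<exists>Q. finite_partition Q (verts G) \<and> card Q \<le> 2 ^ (card P + 3 * card P ^ 3)
           \<and> energy G P + \<epsilon>^6 * real (card (verts G)) ^ 3 \<le> energy G Q"
proof -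
  define V where "V = verts G"
  have "\<forall>X\<in>P. \<forall>Y\<in>P. \<forall>Z\<in>P. \<exists>X' Y' Z'. \<not> eps_regular_triple G \<epsilon> X Y Z \<longrightarrow>
      irregularity_witness G \<epsilon> X Y Z X' Y' Z'"
    by (simp add: not_eps_regular_triple_iff)
  then obtain wX wY wZ where w: "\<And>X Y Z. X \<in> P \<Longrightarrow> Y \<in> P \<Longrightarrow> Z \<in> P \<Longrightarrow> \<not> eps_regular_triple G \<epsilon> X Y Z \<Longrightarrow>
      irregularity_witness G \<epsilon> X Y Z (wX X Y Z) (wY X Y Z) (wZ X Y Z)"
    by metis
  define Ws where "Ws = (\<Union>X\<in>P. \<Union>Y\<in>P. \<Union>Z\<in>P. {wX X Y Z, wY X Y Z, wZ X Y Z})"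
  define Q where "Q = atoms V (P \<union> Ws)"
  have "finite P"
    using finite_partitionD(2)[OF P] .
  then have "card (P \<union> Ws) \<le> card P + 3 * card P ^ 3" "finite (P \<union> Ws)"
    using card_Un_le[of P Ws] card_UN3_le[OF \<open>finite P\<close>, of wX wY wZ] unfolding Ws_def by simp_all
  then have card_Q: "card Q \<le> 2 ^ (card P + 3 * card P ^ 3)"
    unfolding Q_def by (meson card_atoms_le order_trans one_le_numeral power_increasing)
  have Q_part: "finite_partition Q V" "refines Q P"
    unfolding Q_def V_def using finite_partition_atoms finite_partitionD(1)[OF P] refines_atoms[OF P]
    by auto
  have "energy G P + \<epsilon>^5 * bad_volume (eps_regular_triple G \<epsilon>) P \<le> energy G Q"
  proof (rule energy_refinement_gain[OF P[folded V_def] Q_part \<open>\<epsilon> > 0\<close>])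
    fix X Y Z assume XYZ: "X \<in> P" "Y \<in> P" "Z \<in> P" and "\<not> eps_regular_triple G \<epsilon> X Y Z"
    then have wit: "irregularity_witness G \<epsilon> X Y Z (wX X Y Z) (wY X Y Z) (wZ X Y Z)"
      by (rule w)
    have unions: "\<Union>{A \<in> Q. A \<subseteq> W} = W" if "W \<in> {wX X Y Z, wY X Y Z, wZ X Y Z}" for W
    proof -
      have "W \<subseteq> V"
        using wit that finite_partitionD(4)[OF P] XYZ unfolding irregularity_witness_def V_def by blast
      moreover have "W \<in> P \<union> Ws"
        unfolding Ws_def using XYZ that by blast
      ultimately show ?thesis
        unfolding Q_def by (intro Union_atoms_subset)
    qed
    show "\<exists>X' Y' Z'. irregularity_witness G \<epsilon> X Y Z X' Y' Z'
        \<and> \<Union>{A \<in> Q. A \<subseteq> X'} = X' \<and> \<Union>{A \<in> Q. A \<subseteq> Y'} = Y' \<and> \<Union>{A \<in> Q. A \<subseteq> Z'} = Z'"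
      using wit unions[of "wX X Y Z"] unions[of "wY X Y Z"] unions[of "wZ X Y Z"]
      by (intro exI[of _ "wX X Y Z"] exI[of _ "wY X Y Z"] exI[of _ "wZ X Y Z"] conjI) simp_all
  qed
  moreover have "\<epsilon> * real (card V) ^ 3 < bad_volume (eps_regular_triple G \<epsilon>) P"
    using not_regular good_partition_iff_bad_volume[OF P]
    unfolding eps_regular_partition_def V_def by simp
  then have "\<epsilon>^6 * real (card V) ^ 3 \<le> \<epsilon>^5 * bad_volume (eps_regular_triple G \<epsilon>) P"
    using \<open>\<epsilon> > 0\<close> by (simp add: eval_nat_numeral)
  ultimately show ?thesis
    using Q_part card_Q unfolding V_def by (intro exI[of _ Q]) auto
qed

(* Refining by the k parts and by three witness sets for each of the k^3 triples of parts. *)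
definition refinement_bound :: "nat \<Rightarrow> nat" where
  "refinement_bound k = 2 ^ (k + 3 * k ^ 3)"

lemma le_refinement_bound: "k \<le> refinement_bound k"
proof -
  have "k < 2 ^ k" by (rule less_exp)
  also have "\<dots> \<le> refinement_bound k"
    unfolding refinement_bound_def by (intro power_increasing) auto
  finally show ?thesis by simp
qed

lemma refinement_bound_mono: "j \<le> k \<Longrightarrow> refinement_bound j \<le> refinement_bound k"
  unfolding refinement_bound_def by (intro power_increasing add_mono mult_le_mono2 power_mono) auto

lemma hereditary_is_3graph: "hereditary H \<Longrightarrow> G \<in> H \<Longrightarrow> is_3graph G"
  unfolding hereditary_def by blast

lemma regular_or_high_energy_partition:
  assumes "finite (verts G)" "verts G \<noteq> {}" "\<epsilon> > 0"
  shows "\<exists>P. finite_partition P (verts G) \<and> card P \<le> (refinement_bound ^^ j) 1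
           \<and> (eps_regular_partition G \<epsilon> P \<or> real j * \<epsilon>^6 * real (card (verts G)) ^ 3 \<le> energy G P)"
proof (induction j)
  case 0
  show ?case
    using finite_partition_singleton[OF assms(1,2)] energy_nonneg[of G "{verts G}"]
    by (intro exI[of _ "{verts G}"]) simp
next
  case (Suc j)
  then obtain P where P: "finite_partition P (verts G)" "card P \<le> (refinement_bound ^^ j) 1"
    and alternative: "eps_regular_partition G \<epsilon> P \<or> real j * \<epsilon>^6 * real (card (verts G)) ^ 3 \<le> energy G P"
    by blast
  have bound_step: "(refinement_bound ^^ j) 1 \<le> (refinement_bound ^^ Suc j) 1"
    by (simp add: le_refinement_bound)
  show ?case
  proof (cases "eps_regular_partition G \<epsilon> P")
    case True
    then show ?thesis
      using P bound_step by (intro exI[of _ P]) simp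
  next
    case False
    then obtain Q where Q: "finite_partition Q (verts G)" "card Q \<le> refinement_bound (card P)"
      and gain: "energy G P + \<epsilon>^6 * real (card (verts G)) ^ 3 \<le> energy G Q"
      using energy_increment[OF P(1) \<open>\<epsilon> > 0\<close>] unfolding refinement_bound_def by blast
    have "card Q \<le> (refinement_bound ^^ Suc j) 1"
      using Q(2) refinement_bound_mono[OF P(2)] by simp
    moreover have "real (Suc j) * \<epsilon>^6 * real (card (verts G)) ^ 3 \<le> energy G Q"
      using alternative False gain by (simp add: algebra_simps)
    ultimately show ?thesis
      using Q(1) by blast
  qed
qed

lemma regular_partition_exists:
  assumes "finite (verts G)" "\<epsilon> > 0"
  shows "\<exists>P. is_partition P (verts G) \<and> card P \<le> (refinement_bound ^^ (nat \<lceil>1 / \<epsilon>^6\<rceil> + 1)) 1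
           \<and> eps_regular_partition G \<epsilon> P"
proof (cases "verts G = {}")
  case True
  then have "is_partition {} (verts G)" "eps_regular_partition G \<epsilon> {}"
    unfolding is_partition_def eps_regular_partition_def good_partition_def by simp_all
  then show ?thesis by force
next
  case False
  define j where "j = nat \<lceil>1 / \<epsilon>^6\<rceil> + 1"
  obtain P where P: "finite_partition P (verts G)" "card P \<le> (refinement_bound ^^ j) 1"
    and alternative: "eps_regular_partition G \<epsilon> P \<or> real j * \<epsilon>^6 * real (card (verts G)) ^ 3 \<le> energy G P"
    using regular_or_high_energy_partition[OF assms(1) False assms(2)] by blast
  have "1 / \<epsilon>^6 < real j"
    unfolding j_def by linarith
  then have "1 < real j * \<epsilon>^6"
    using \<open>\<epsilon> > 0\<close> by (simp add: divide_less_eq)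
  moreover have "0 < real (card (verts G)) ^ 3"
    using assms(1) False by (simp add: card_gt_0_iff)
  ultimately have "real (card (verts G)) ^ 3 < real j * \<epsilon>^6 * real (card (verts G)) ^ 3"
    using mult_strict_right_mono by fastforce
  then have "eps_regular_partition G \<epsilon> P"
    using alternative energy_le_cube[OF P(1), of G] by linarith
  then show ?thesis
    using P unfolding j_def finite_partition_def by blast
qed

lemma bound_works_M_reg:
  assumes "hereditary H" "\<epsilon> > 0"
  shows "bound_works eps_regular_partition H \<epsilon> (M_reg H \<epsilon>)"
  unfolding M_reg_def
proof (rule LeastI)
  show "bound_works eps_regular_partition H \<epsilon> ((refinement_bound ^^ (nat \<lceil>1 / \<epsilon>^6\<rceil> + 1)) 1)"
    unfolding bound_works_def
  proof (intro exI[of _ 0] ballI impI)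
    fix G assume "G \<in> H"
    then have "finite (verts G)"
      using hereditary_is_3graph[OF assms(1)] unfolding is_3graph_def by blast
    then show "\<exists>P. is_partition P (verts G) \<and> card P \<le> (refinement_bound ^^ (nat \<lceil>1 / \<epsilon>^6\<rceil> + 1)) 1
        \<and> eps_regular_partition G \<epsilon> P"
      using regular_partition_exists assms(2) by blast
  qed
qed

section \<open>Homogeneity implies regularity\<close>

lemma density_large_sub_box:
  assumes fin: "finite X" "finite Y" "finite Z" and ne: "X \<noteq> {}" "Y \<noteq> {}" "Z \<noteq> {}"
    and sub: "X' \<subseteq> X" "Y' \<subseteq> Y" "Z' \<subseteq> Z"
    and large: "\<epsilon> * real (card X) \<le> real (card X')" "\<epsilon> * real (card Y) \<le> real (card Y')"
      "\<epsilon> * real (card Z) \<le> real (card Z')"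
    and "0 < \<epsilon>"
  shows "\<epsilon>^3 * density G X' Y' Z' \<le> density G X Y Z"
    and "\<epsilon>^3 * (1 - density G X' Y' Z') \<le> 1 - density G X Y Z"
proof -
  have fin': "finite X'" "finite Y'" "finite Z'"
    using sub fin finite_subset by blast+
  have "0 < vol X Y Z"
    by (rule vol_pos[OF fin ne])
  then have "0 < \<epsilon>^3 * vol X Y Z"
    using \<open>0 < \<epsilon>\<close> by simp
  moreover have "\<epsilon>^3 * vol X Y Z \<le> vol X' Y' Z'"
    using large \<open>0 < \<epsilon>\<close> by (intro vol_ge_scaled) auto
  ultimately have "0 < vol X' Y' Z'"
    by linarith
  have scale: "\<epsilon>^3 * (c' / vol X' Y' Z') \<le> c / vol X Y Z" if "0 \<le> c'" "c' \<le> c" for c c'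
  proof -
    have "\<epsilon>^3 * (c' / vol X' Y' Z') \<le> \<epsilon>^3 * (c' / (\<epsilon>^3 * vol X Y Z))"
      using that \<open>0 < \<epsilon>^3 * vol X Y Z\<close> \<open>\<epsilon>^3 * vol X Y Z \<le> vol X' Y' Z'\<close> \<open>0 < \<epsilon>\<close>
      by (intro mult_left_mono divide_left_mono) auto
    also have "\<dots> = c' / vol X Y Z"
      using \<open>0 < \<epsilon>\<close> by simp
    also have "\<dots> \<le> c / vol X Y Z"
      using that \<open>0 < vol X Y Z\<close> by (simp add: divide_right_mono)
    finally show ?thesis .
  qed
  show "\<epsilon>^3 * density G X' Y' Z' \<le> density G X Y Z"
    unfolding density_eq_edge_count[OF fin] density_eq_edge_count[OF fin']
    using edge_count_nonneg edge_count_mono[OF fin sub] by (intro scale)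
  have complement: "1 - density G X' Y' Z' = (vol X' Y' Z' - edge_count G X' Y' Z') / vol X' Y' Z'"
    "1 - density G X Y Z = (vol X Y Z - edge_count G X Y Z) / vol X Y Z"
    unfolding density_eq_edge_count[OF fin] density_eq_edge_count[OF fin']
    using \<open>0 < vol X Y Z\<close> \<open>0 < vol X' Y' Z'\<close> by (simp_all add: field_simps)
  show "\<epsilon>^3 * (1 - density G X' Y' Z') \<le> 1 - density G X Y Z"
    unfolding complement
    by (rule scale) (use edge_count_le_vol[OF fin', of G] non_edge_count_mono[OF fin sub, of G] in auto)
qed

lemma eps_homogeneous_imp_regular_triple:
  assumes fin: "finite X" "finite Y" "finite Z" and ne: "X \<noteq> {}" "Y \<noteq> {}" "Z \<noteq> {}"
    and "0 < \<epsilon>" and hom: "eps_homogeneous_triple G (\<epsilon>^4) X Y Z"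
  shows "eps_regular_triple G \<epsilon> X Y Z"
  unfolding eps_regular_triple_def
proof (intro allI impI, elim conjE)
  fix X' Y' Z' assume sub: "X' \<subseteq> X" "Y' \<subseteq> Y" "Z' \<subseteq> Z"
    and large: "\<epsilon> * real (card X) \<le> real (card X')" "\<epsilon> * real (card Y) \<le> real (card Y')"
      "\<epsilon> * real (card Z) \<le> real (card Z')"
  let ?d = "density G X Y Z" and ?d' = "density G X' Y' Z'"
  have range: "0 \<le> ?d" "?d \<le> 1" "0 \<le> ?d'" "?d' \<le> 1"
    using density_nonneg density_le_1[OF fin] density_le_1 sub fin finite_subset by metis+
  note scaled = density_large_sub_box[OF fin ne sub large \<open>0 < \<epsilon>\<close>, of G]
  show "\<bar>?d - ?d'\<bar> \<le> \<epsilon>"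
  proof (cases "\<epsilon> < 1")
    case True
    have "\<epsilon>^4 \<le> \<epsilon>"
      using power_decreasing[of 1 4 \<epsilon>] True \<open>0 < \<epsilon>\<close> by simp
    have cancel: "x < \<epsilon>" if "\<epsilon>^3 * x < \<epsilon>^4" for x
      using that \<open>0 < \<epsilon>\<close> by (simp add: eval_nat_numeral mult.assoc)
    from hom consider "?d < \<epsilon>^4" | "1 - \<epsilon>^4 < ?d"
      unfolding eps_homogeneous_triple_def Let_def by linarith
    then show ?thesis
    proof cases
      case 1
      then have "?d' < \<epsilon>"
        using scaled(1) by (intro cancel) linarith
      then show ?thesis
        using 1 range \<open>\<epsilon>^4 \<le> \<epsilon>\<close> by linarith
    next
      case 2
      then have "1 - ?d' < \<epsilon>"
        using scaled(2) by (intro cancel) linarith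
      then show ?thesis
        using 2 range \<open>\<epsilon>^4 \<le> \<epsilon>\<close> by linarith
    qed
  qed (use range in linarith)
qed

lemma bad_volume_mono:
  assumes "\<And>X Y Z. X \<in> P \<Longrightarrow> Y \<in> P \<Longrightarrow> Z \<in> P \<Longrightarrow> Q1 X Y Z \<Longrightarrow> Q2 X Y Z"
  shows "bad_volume Q2 P \<le> bad_volume Q1 P"
  unfolding bad_volume_def using assms vol_nonneg by (intro sum_mono) auto

lemma bad_volume_le_cube: "finite_partition P V \<Longrightarrow> bad_volume Q P \<le> real (card V) ^ 3"
  using card_covered_triples[of P V Q] by linarith

lemma eps_homogeneous_imp_regular_partition:
  assumes P: "finite_partition P (verts G)" and "\<epsilon> > 0" and hom: "eps_homogeneous_partition G (\<epsilon>^4) P"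
  shows "eps_regular_partition G \<epsilon> P"
proof (cases "\<epsilon> \<le> 1")
  case True
  have "bad_volume (eps_regular_triple G \<epsilon>) P \<le> bad_volume (eps_homogeneous_triple G (\<epsilon>^4)) P"
    using finite_partitionD(5,6)[OF P] \<open>\<epsilon> > 0\<close>
    by (intro bad_volume_mono eps_homogeneous_imp_regular_triple) auto
  also have "\<dots> \<le> \<epsilon>^4 * real (card (verts G)) ^ 3"
    using hom good_partition_iff_bad_volume[OF P] unfolding eps_homogeneous_partition_def by blast
  also have "\<dots> \<le> \<epsilon> * real (card (verts G)) ^ 3"
    using power_decreasing[of 1 4 \<epsilon>] True \<open>\<epsilon> > 0\<close> by (intro mult_right_mono) auto
  finally show ?thesis
    using good_partition_iff_bad_volume[OF P] unfolding eps_regular_partition_def by blast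
next
  case False
  then have "bad_volume (eps_regular_triple G \<epsilon>) P \<le> \<epsilon> * real (card (verts G)) ^ 3"
    using bad_volume_le_cube[OF P, of "eps_regular_triple G \<epsilon>"] mult_right_mono[of 1 \<epsilon> "real (card (verts G)) ^ 3"]
    by simp
  then show ?thesis
    using good_partition_iff_bad_volume[OF P] unfolding eps_regular_partition_def by blast
qed

lemma M_reg_le_M_hom:
  assumes H: "hereditary H" and "M_hom_defined H" and "\<epsilon> > 0"
  shows "M_reg H \<epsilon> \<le> M_hom H (\<epsilon> ^ 4)"
  unfolding M_reg_def
proof (rule Least_le)
  have "\<exists>M. bound_works eps_homogeneous_partition H (\<epsilon>^4) M"
    using assms(2,3) unfolding M_hom_defined_def by simp
  then have "bound_works eps_homogeneous_partition H (\<epsilon>^4) (M_hom H (\<epsilon>^4))"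
    unfolding M_hom_def by (rule LeastI_ex)
  then obtain N where N: "\<forall>G\<in>H. N \<le> card (verts G) \<longrightarrow> (\<exists>P. is_partition P (verts G)
      \<and> card P \<le> M_hom H (\<epsilon>^4) \<and> eps_homogeneous_partition G (\<epsilon>^4) P)"
    unfolding bound_works_def by blast
  show "bound_works eps_regular_partition H \<epsilon> (M_hom H (\<epsilon>^4))"
    unfolding bound_works_def
  proof (intro exI[of _ N] ballI impI)
    fix G assume "G \<in> H" "N \<le> card (verts G)"
    then obtain P where P: "is_partition P (verts G)" "card P \<le> M_hom H (\<epsilon>^4)"
      and hom: "eps_homogeneous_partition G (\<epsilon>^4) P"
      using N by blast
    have "finite (verts G)"
      using hereditary_is_3graph[OF H \<open>G \<in> H\<close>] unfolding is_3graph_def by blast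
    then have "finite_partition P (verts G)"
      using P(1) unfolding finite_partition_def by blast
    then have "eps_regular_partition G \<epsilon> P"
      by (rule eps_homogeneous_imp_regular_partition[OF _ \<open>\<epsilon> > 0\<close> hom])
    then show "\<exists>P. is_partition P (verts G) \<and> card P \<le> M_hom H (\<epsilon>^4) \<and> eps_regular_partition G \<epsilon> P"
      using P by blast
  qed
qed

lemma hg_iso_sym: "hg_iso G G' \<Longrightarrow> hg_iso G' G"
proof -
  assume "hg_iso G G'"
  then obtain f where f: "bij_betw f (verts G) (verts G')"
    and edges_f: "\<forall>e. e \<subseteq> verts G \<longrightarrow> (e \<in> edges G \<longleftrightarrow> f ` e \<in> edges G')"
    unfolding hg_iso_def by blast
  define g where "g = inv_into (verts G) f"
  have g: "bij_betw g (verts G') (verts G)"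
    unfolding g_def by (rule bij_betw_inv_into[OF f])
  have "e \<in> edges G' \<longleftrightarrow> g ` e \<in> edges G" if "e \<subseteq> verts G'" for e
  proof -
    have "g ` e \<subseteq> verts G"
      using g that bij_betw_imp_surj_on by blast
    moreover have "f ` g ` e = e"
      unfolding g_def using that f by (simp add: bij_betw_def image_inv_into_cancel)
    ultimately show ?thesis
      using edges_f by metis
  qed
  then show ?thesis
    unfolding hg_iso_def using g by blast
qed

lemma hg_iso_trans: "hg_iso G G' \<Longrightarrow> hg_iso G' G'' \<Longrightarrow> hg_iso G G''"
proof -
  assume "hg_iso G G'" "hg_iso G' G''"
  then obtain f g where f: "bij_betw f (verts G) (verts G')"
    and edges_f: "\<forall>e. e \<subseteq> verts G \<longrightarrow> (e \<in> edges G \<longleftrightarrow> f ` e \<in> edges G')"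
    and g: "bij_betw g (verts G') (verts G'')"
    and edges_g: "\<forall>e. e \<subseteq> verts G' \<longrightarrow> (e \<in> edges G' \<longleftrightarrow> g ` e \<in> edges G'')"
    unfolding hg_iso_def by blast
  have "e \<in> edges G \<longleftrightarrow> (g \<circ> f) ` e \<in> edges G''" if "e \<subseteq> verts G" for e
  proof -
    have "f ` e \<subseteq> verts G'"
      using that f bij_betw_imp_surj_on by blast
    then show ?thesis
      using edges_f edges_g that by (simp add: image_comp)
  qed
  then show ?thesis
    unfolding hg_iso_def using bij_betw_trans[OF f g] by blast
qed

lemma ex_hg_iso_initial_segment:
  assumes "is_3graph G"
  shows "\<exists>G'. hg_iso G G' \<and> verts G' \<subseteq> {0..<card (verts G)} \<and> edges G' \<subseteq> Pow {0..<card (verts G)}"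
proof -
  have fin: "finite (verts G)" and edges_sub: "\<forall>e\<in>edges G. e \<subseteq> verts G"
    using assms unfolding is_3graph_def by auto
  obtain h where h: "bij_betw h (verts G) {0..<card (verts G)}"
    using ex_bij_betw_finite_nat[OF fin] by blast
  define G' where "G' = ({0..<card (verts G)}, (\<lambda>e. h ` e) ` edges G)"
  have verts_G': "verts G' = {0..<card (verts G)}"
    unfolding G'_def verts_def by simp
  have edges_iff: "e \<in> edges G \<longleftrightarrow> h ` e \<in> edges G'" if "e \<subseteq> verts G" for e
  proof
    assume "h ` e \<in> edges G'"
    then obtain e' where "e' \<in> edges G" "h ` e = h ` e'"
      unfolding G'_def edges_def by auto
    moreover have "inj_on h (verts G)"
      using h bij_betw_def by blast
    ultimately show "e \<in> edges G"
      using inj_on_image_eq_iff that edges_sub by metis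
  qed (simp add: G'_def edges_def)
  have "hg_iso G G'"
    unfolding hg_iso_def verts_G' using h edges_iff by (intro exI[of _ h]) simp
  moreover have "edges G' \<subseteq> Pow {0..<card (verts G)}"
  proof
    fix e' assume "e' \<in> edges G'"
    then obtain e where "e \<in> edges G" "e' = h ` e"
      unfolding G'_def edges_def by auto
    then have "e' \<subseteq> h ` verts G"
      using edges_sub by blast
    then show "e' \<in> Pow {0..<card (verts G)}"
      using h bij_betw_imp_surj_on by blast
  qed
  ultimately show ?thesis
    using verts_G' by blast
qed

lemma ex_large_of_infinite_non_isomorphic:
  assumes "infinite S" and S: "\<forall>G\<in>S. is_3graph G"
    and non_iso: "\<forall>G\<in>S. \<forall>G'\<in>S. G \<noteq> G' \<longrightarrow> \<not> hg_iso G G'"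
  shows "\<exists>G\<in>S. m \<le> card (verts G)"
proof (rule ccontr)
  assume "\<not> ?thesis"
  then have small: "card (verts G) < m" if "G \<in> S" for G
    using that by auto
  obtain c where c: "\<And>G. G \<in> S \<Longrightarrow> hg_iso G (c G) \<and> verts (c G) \<subseteq> {0..<card (verts G)}
      \<and> edges (c G) \<subseteq> Pow {0..<card (verts G)}"
    using ex_hg_iso_initial_segment S by metis
  have "c ` S \<subseteq> Pow {0..<m} \<times> Pow (Pow {0..<m})"
  proof
    fix G' assume "G' \<in> c ` S"
    then obtain G where "G \<in> S" "G' = c G" by blast
    moreover have "{0..<card (verts G)} \<subseteq> {0..<m}"
      using small[OF \<open>G \<in> S\<close>] by auto
    ultimately have "verts G' \<subseteq> {0..<m}" "edges G' \<subseteq> Pow {0..<m}"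
      using c[OF \<open>G \<in> S\<close>] by blast+
    then show "G' \<in> Pow {0..<m} \<times> Pow (Pow {0..<m})"
      unfolding verts_def edges_def by (cases G') auto
  qed
  then have "finite (c ` S)"
    by (rule finite_subset) simp
  moreover have "inj_on c S"
  proof (rule inj_onI)
    fix G G' assume "G \<in> S" "G' \<in> S" "c G = c G'"
    have "hg_iso G (c G)" "hg_iso (c G') G'"
      using c[OF \<open>G \<in> S\<close>] hg_iso_sym c[OF \<open>G' \<in> S\<close>] by blast+
    then have "hg_iso G (c G)" "hg_iso (c G) G'"
      using \<open>c G = c G'\<close> by simp_all
    then have "hg_iso G G'"
      by (rule hg_iso_trans)
    then show "G = G'"
      using non_iso \<open>G \<in> S\<close> \<open>G' \<in> S\<close> by blast
  qed
  ultimately show False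
    using \<open>infinite S\<close> finite_imageD by blast
qed

section \<open>Regular partitions of blowups\<close>

lemma verts_induced_sub [simp]: "verts (induced_sub G W) = W"
  unfolding induced_sub_def verts_def by simp

lemma edges_induced_sub [simp]: "edges (induced_sub G W) = {e \<in> edges G. e \<subseteq> W}"
  unfolding induced_sub_def edges_def by simp

definition fibre :: "hg \<Rightarrow> (nat \<Rightarrow> nat) \<Rightarrow> nat \<Rightarrow> nat set" where
  "fibre B f u = {x \<in> verts B. f x = u}"

definition blowup_map :: "nat \<Rightarrow> hg \<Rightarrow> hg \<Rightarrow> (nat \<Rightarrow> nat) \<Rightarrow> bool" where
  "blowup_map n G B f \<longleftrightarrow> f ` verts B \<subseteq> verts G \<and> (\<forall>u\<in>verts G. card (fibre B f u) = n) \<and>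
     (\<forall>x1\<in>verts B. \<forall>x2\<in>verts B. \<forall>x3\<in>verts B. f x1 \<noteq> f x2 \<and> f x1 \<noteq> f x3 \<and> f x2 \<noteq> f x3 \<longrightarrow>
        ({x1, x2, x3} \<in> edges B \<longleftrightarrow> {f x1, f x2, f x3} \<in> edges G))"

lemma is_blowup_iff_blowup_map: "is_blowup n G B \<longleftrightarrow> is_3graph B \<and> (\<exists>f. blowup_map n G B f)"
  unfolding is_blowup_def blowup_map_def fibre_def ..

lemma blowup_mapD:
  assumes "blowup_map n G B f"
  shows "\<And>x. x \<in> verts B \<Longrightarrow> f x \<in> verts G" "\<And>u. u \<in> verts G \<Longrightarrow> card (fibre B f u) = n"
    "\<And>x1 x2 x3. x1 \<in> verts B \<Longrightarrow> x2 \<in> verts B \<Longrightarrow> x3 \<in> verts B \<Longrightarrow>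
       f x1 \<noteq> f x2 \<Longrightarrow> f x1 \<noteq> f x3 \<Longrightarrow> f x2 \<noteq> f x3 \<Longrightarrow>
       {x1, x2, x3} \<in> edges B \<longleftrightarrow> {f x1, f x2, f x3} \<in> edges G"
  using assms unfolding blowup_map_def by blast+

lemma card_verts_blowup_map:
  assumes "blowup_map n G B f" "finite (verts G)" "finite (verts B)"
  shows "card (verts B) = card (verts G) * n"
proof -
  have "verts B = (\<Union>u\<in>verts G. fibre B f u)"
    using assms(1) unfolding blowup_map_def fibre_def by blast
  moreover have "card (\<Union>u\<in>verts G. fibre B f u) = (\<Sum>u\<in>verts G. card (fibre B f u))"
    using assms(2,3) by (intro card_UN_disjoint) (auto simp: fibre_def)
  ultimately show ?thesis
    using assms(1) unfolding blowup_map_def by simp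
qed

lemma density_blowup_map_fibres:
  assumes f: "blowup_map n G B f" and "finite (verts B)"
    and sub: "X \<subseteq> fibre B f u1" "Y \<subseteq> fibre B f u2" "Z \<subseteq> fibre B f u3"
    and ne: "X \<noteq> {}" "Y \<noteq> {}" "Z \<noteq> {}" and distinct: "u1 \<noteq> u2" "u1 \<noteq> u3" "u2 \<noteq> u3"
  shows "density B X Y Z = of_bool ({u1, u2, u3} \<in> edges G)"
proof -
  have "X \<subseteq> verts B" "Y \<subseteq> verts B" "Z \<subseteq> verts B"
    using sub unfolding fibre_def by auto
  then have fin: "finite X" "finite Y" "finite Z"
    using \<open>finite (verts B)\<close> by (auto intro: finite_subset)
  have "{x, y, z} \<in> edges B \<longleftrightarrow> {u1, u2, u3} \<in> edges G" if "x \<in> X" "y \<in> Y" "z \<in> Z" for x y z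
  proof -
    have "x \<in> verts B" "y \<in> verts B" "z \<in> verts B" "f x = u1" "f y = u2" "f z = u3"
      using that sub unfolding fibre_def by blast+
    then show ?thesis
      using blowup_mapD(3)[OF f] distinct by simp
  qed
  then have "edge_count B X Y Z = (\<Sum>x\<in>X. \<Sum>y\<in>Y. \<Sum>z\<in>Z. of_bool ({u1, u2, u3} \<in> edges G))"
    unfolding edge_count_def by (intro sum.cong refl) simp
  also have "\<dots> = of_bool ({u1, u2, u3} \<in> edges G) * vol X Y Z"
    unfolding vol_def by simp
  finally show ?thesis
    using vol_pos[OF fin ne] by (simp add: density_eq_edge_count[OF fin])
qed

lemma is_blowup_induced_sub:
  assumes "is_blowup n G B" "U \<subseteq> verts G"
  obtains W where "W \<subseteq> verts B" "is_blowup n (induced_sub G U) (induced_sub B W)"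
proof -
  obtain f where B: "is_3graph B" and f: "blowup_map n G B f"
    using assms(1) unfolding is_blowup_iff_blowup_map by blast
  define W where "W = {x \<in> verts B. f x \<in> U}"
  have "W \<subseteq> verts B"
    unfolding W_def by blast
  then have "is_3graph (induced_sub B W)"
    using B finite_subset unfolding is_3graph_def by auto
  moreover have "card (fibre (induced_sub B W) f u) = n" if "u \<in> U" for u
  proof -
    have "fibre (induced_sub B W) f u = fibre B f u"
      using that unfolding fibre_def W_def by auto
    then show ?thesis
      using blowup_mapD(2)[OF f] that assms(2) by auto
  qed
  moreover have "{x1, x2, x3} \<in> edges (induced_sub B W) \<longleftrightarrow> {f x1, f x2, f x3} \<in> edges (induced_sub G U)"
    if "x1 \<in> W" "x2 \<in> W" "x3 \<in> W" "f x1 \<noteq> f x2" "f x1 \<noteq> f x3" "f x2 \<noteq> f x3" for x1 x2 x3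
  proof -
    have "{x1, x2, x3} \<subseteq> W" "{f x1, f x2, f x3} \<subseteq> U" "x1 \<in> verts B" "x2 \<in> verts B" "x3 \<in> verts B"
      using that unfolding W_def by auto
    then show ?thesis
      using blowup_mapD(3)[OF f] that(4-6) by simp
  qed
  moreover have "f ` W \<subseteq> U"
    unfolding W_def by blast
  ultimately have "blowup_map n (induced_sub G U) (induced_sub B W) f"
    unfolding blowup_map_def by simp
  with \<open>is_3graph (induced_sub B W)\<close> show thesis
    using that \<open>W \<subseteq> verts B\<close> unfolding is_blowup_iff_blowup_map by blast
qed

lemma not_eps_regular_triple_of_sub_boxes:
  assumes sub: "X1 \<subseteq> X" "X2 \<subseteq> X" "Y1 \<subseteq> Y" "Z1 \<subseteq> Z"
    and large: "\<epsilon> * real (card X) \<le> real (card X1)" "\<epsilon> * real (card X) \<le> real (card X2)"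
      "\<epsilon> * real (card Y) \<le> real (card Y1)" "\<epsilon> * real (card Z) \<le> real (card Z1)"
    and gap: "2 * \<epsilon> < \<bar>density G X1 Y1 Z1 - density G X2 Y1 Z1\<bar>"
  shows "\<not> eps_regular_triple G \<epsilon> X Y Z"
proof
  assume "eps_regular_triple G \<epsilon> X Y Z"
  then have "\<bar>density G X Y Z - density G X1 Y1 Z1\<bar> \<le> \<epsilon>" "\<bar>density G X Y Z - density G X2 Y1 Z1\<bar> \<le> \<epsilon>"
    using sub large unfolding eps_regular_triple_def by blast+
  then show False
    using gap by linarith
qed

lemma vol_le_of_not_eps_regular:
  assumes P: "finite_partition P (verts G)" "eps_regular_partition G \<epsilon> P"
    and "X \<in> P" "Y \<in> P" "Z \<in> P" "\<not> eps_regular_triple G \<epsilon> X Y Z"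
  shows "vol X Y Z \<le> \<epsilon> * real (card (verts G)) ^ 3"
  using vol_le_bad_volume[of P X Y Z "eps_regular_triple G \<epsilon>", OF finite_partitionD(2)[OF P(1)] assms(3-6)] P
    good_partition_iff_bad_volume[OF P(1)] unfolding eps_regular_partition_def by fastforce

lemma ex_part_majority:
  assumes P: "finite_partition P V" and "F \<subseteq> V" "P \<noteq> {}"
  shows "\<exists>X\<in>P. card F \<le> card (F \<inter> X) * card P"
proof (rule ccontr)
  assume "\<not> ?thesis"
  then have less: "card (F \<inter> X) * card P < card F" if "X \<in> P" for X
    using that by auto
  have "F = (\<Union>X\<in>P. F \<inter> X)"
    using \<open>F \<subseteq> V\<close> finite_partitionD(3)[OF P] by blast
  then have "card F \<le> (\<Sum>X\<in>P. card (F \<inter> X))"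
    using card_UN_le[OF finite_partitionD(2)[OF P], of "\<lambda>X. F \<inter> X"] by simp
  then have "card F * card P \<le> (\<Sum>X\<in>P. card (F \<inter> X)) * card P"
    by (rule mult_le_mono1)
  also have "\<dots> = (\<Sum>X\<in>P. card (F \<inter> X) * card P)"
    by (simp add: sum_distrib_right)
  also have "\<dots> < (\<Sum>X\<in>P. card F)"
    using less finite_partitionD(2)[OF P] \<open>P \<noteq> {}\<close> by (intro sum_strict_mono) auto
  finally show False
    by simp
qed

lemma not_hg_equivE:
  assumes "is_3graph G" "\<not> hg_equiv G a b"
  obtains w1 w2 where "w1 \<in> verts G" "w2 \<in> verts G" "w1 \<notin> {a, b}" "w2 \<notin> {a, b}" "w1 \<noteq> w2"
    "{a, w1, w2} \<in> edges G \<longleftrightarrow> {b, w1, w2} \<notin> edges G"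
proof -
  obtain w1 w2 where w: "w1 \<in> verts G" "w2 \<in> verts G" "w1 \<notin> {a, b}" "w2 \<notin> {a, b}"
    and differ: "{a, w1, w2} \<in> edges G \<longleftrightarrow> {b, w1, w2} \<notin> edges G"
    using assms(2) unfolding hg_equiv_def by blast
  moreover have "w1 \<noteq> w2"
  proof
    assume "w1 = w2"
    then have "card {a, w1, w2} \<noteq> 3" "card {b, w1, w2} \<noteq> 3"
      by (simp_all add: card_insert_if)
    then show False
      using differ assms(1) unfolding is_3graph_def by blast
  qed
  ultimately show thesis
    using that by blast
qed

lemma blowup_map_not_eps_regular_triple:
  assumes f: "blowup_map n G B f" "finite (verts B)"
    and w: "w1 \<notin> {a, b}" "w2 \<notin> {a, b}" "w1 \<noteq> w2"
    and differ: "{a, w1, w2} \<in> edges G \<longleftrightarrow> {b, w1, w2} \<notin> edges G"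
    and sub: "Sa \<subseteq> fibre B f a \<inter> X" "Sb \<subseteq> fibre B f b \<inter> X" "Sc \<subseteq> fibre B f w1 \<inter> Y" "Sd \<subseteq> fibre B f w2 \<inter> Z"
    and ne: "Sa \<noteq> {}" "Sb \<noteq> {}" "Sc \<noteq> {}" "Sd \<noteq> {}"
    and large: "\<epsilon> * real (card X) \<le> real (card Sa)" "\<epsilon> * real (card X) \<le> real (card Sb)"
      "\<epsilon> * real (card Y) \<le> real (card Sc)" "\<epsilon> * real (card Z) \<le> real (card Sd)"
    and "\<epsilon> < 1/2"
  shows "\<not> eps_regular_triple B \<epsilon> X Y Z"
proof (rule not_eps_regular_triple_of_sub_boxes)
  show "Sa \<subseteq> X" "Sb \<subseteq> X" "Sc \<subseteq> Y" "Sd \<subseteq> Z"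
    using sub by auto
  have "density B Sa Sc Sd = of_bool ({a, w1, w2} \<in> edges G)"
    "density B Sb Sc Sd = of_bool ({b, w1, w2} \<in> edges G)"
    using sub ne w by (intro density_blowup_map_fibres[OF f]; auto)+
  then show "2 * \<epsilon> < \<bar>density B Sa Sc Sd - density B Sb Sc Sd\<bar>"
    using differ \<open>\<epsilon> < 1/2\<close> by auto
qed (fact large)+

lemma eps_scaled_le_share:
  fixes \<epsilon> k m n c t :: real
  assumes "0 < \<epsilon>" "1 \<le> k" "1 \<le> m" "\<epsilon> * (k * m) ^ 3 < 1" "0 \<le> n" "n \<le> c * k" "t \<le> m * n"
  shows "\<epsilon> * t \<le> c"
proof -
  have "1 \<le> k * m"
    using assms(2,3) mult_mono[of 1 k 1 m] by simp
  then have "\<epsilon> * (k * m) \<le> \<epsilon> * (k * m) ^ 3"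
    using assms(1) power_increasing[of 1 3 "k * m"] by (intro mult_left_mono) auto
  then have "\<epsilon> * (k * m) \<le> 1"
    using assms(4) by linarith
  have "\<epsilon> * t * k \<le> \<epsilon> * (m * n) * k"
    using assms by (intro mult_right_mono mult_left_mono) auto
  also have "\<dots> = (\<epsilon> * (k * m)) * n"
    by (simp add: algebra_simps)
  also have "\<dots> \<le> n"
    using \<open>\<epsilon> * (k * m) \<le> 1\<close> assms(1,5) \<open>1 \<le> k * m\<close> by (intro mult_left_le_one_le) auto
  also have "\<dots> \<le> c * k"
    using assms(6) .
  finally show ?thesis
    using assms(2) by simp
qed

lemma eps_volume_lt_product:
  fixes \<epsilon> k m n x y z :: real
  assumes "0 < k" "0 < n" "\<epsilon> * (k * m) ^ 3 < 1" "n \<le> x * k" "n \<le> y * k" "n \<le> z * k"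
  shows "\<epsilon> * (m * n) ^ 3 < x * y * z"
proof -
  have "\<epsilon> * (m * n) ^ 3 * k ^ 3 = \<epsilon> * (k * m) ^ 3 * n ^ 3"
    by (simp add: power_mult_distrib)
  also have "\<dots> < n ^ 3"
    using mult_strict_right_mono[OF assms(3), of "n ^ 3"] assms(2) by simp
  also have "\<dots> \<le> (x * k) * (y * k) * (z * k)"
    unfolding power3_eq_cube using assms by (intro mult_mono) auto
  also have "\<dots> = x * y * z * k ^ 3"
    by (simp add: power3_eq_cube)
  finally show ?thesis
    using assms(1) by simp
qed

lemma blowup_map_major_parts:
  assumes f: "blowup_map n G B f" and "n \<ge> 1" and P: "finite_partition P (verts B)"
  obtains \<pi> where "\<And>u. u \<in> verts G \<Longrightarrow> \<pi> u \<in> P \<and> real n \<le> real (card (fibre B f u \<inter> \<pi> u)) * real (card P)"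
proof -
  have "\<exists>X\<in>P. real n \<le> real (card (fibre B f u \<inter> X)) * real (card P)" if "u \<in> verts G" for u
  proof -
    have "fibre B f u \<subseteq> verts B" "card (fibre B f u) = n"
      using blowup_mapD(2)[OF f that] unfolding fibre_def by auto
    then have "P \<noteq> {}"
      using \<open>n \<ge> 1\<close> finite_partitionD(3)[OF P] by auto
    then show ?thesis
      using ex_part_majority[OF P \<open>fibre B f u \<subseteq> verts B\<close>] \<open>card (fibre B f u) = n\<close>
      by (metis of_nat_le_iff of_nat_mult)
  qed
  then show thesis
    using that by metis
qed

lemma blowup_map_major_parts_large:
  assumes G: "is_3graph G" and B: "finite (verts B)" "blowup_map n G B f"
    and P: "finite_partition P (verts B)"
    and eps: "0 < \<epsilon>" "\<epsilon> * (real (card P) * real (card (verts G))) ^ 3 < 1"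
    and major: "\<And>u. u \<in> verts G \<Longrightarrow> \<pi> u \<in> P \<and> real n \<le> real (card (fibre B f u \<inter> \<pi> u)) * real (card P)"
  shows "\<And>u T. u \<in> verts G \<Longrightarrow> T \<in> P \<Longrightarrow> \<epsilon> * real (card T) \<le> real (card (fibre B f u \<inter> \<pi> u))"
    and "\<And>u v w. u \<in> verts G \<Longrightarrow> v \<in> verts G \<Longrightarrow> w \<in> verts G \<Longrightarrow> 0 < n \<Longrightarrow>
      \<epsilon> * real (card (verts B)) ^ 3 < vol (\<pi> u) (\<pi> v) (\<pi> w)"
proof -
  define k m where "k = real (card P)" and "m = real (card (verts G))"
  have bounds: "1 \<le> k" "1 \<le> m" if "u \<in> verts G" for u
    using major[OF that] finite_partitionD(2)[OF P] that G unfolding k_def m_def is_3graph_def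
    by (auto simp: Suc_le_eq card_gt_0_iff)
  have card_B: "real (card (verts B)) = m * real n"
    using card_verts_blowup_map[OF B(2) _ B(1)] G unfolding m_def is_3graph_def by simp
  show "\<epsilon> * real (card T) \<le> real (card (fibre B f u \<inter> \<pi> u))" if "u \<in> verts G" "T \<in> P" for u T
  proof (rule eps_scaled_le_share[OF eps(1) bounds[OF that(1)] _ of_nat_0_le_iff])
    show "\<epsilon> * (k * m) ^ 3 < 1" "real n \<le> real (card (fibre B f u \<inter> \<pi> u)) * k"
      using eps(2) major[OF that(1)] unfolding k_def m_def by auto
    have "card T \<le> card (verts B)"
      using finite_partitionD(4)[OF P that(2)] B(1) by (rule card_mono[rotated])
    then show "real (card T) \<le> m * real n"
      using card_B by simp
  qed
  have "real n \<le> real (card (\<pi> u)) * k" if "u \<in> verts G" for u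
  proof -
    have "card (fibre B f u \<inter> \<pi> u) \<le> card (\<pi> u)"
      using finite_partitionD(5)[OF P] major[OF that] by (simp add: card_mono)
    then show ?thesis
      using major[OF that] bounds[OF that] unfolding k_def
      by (meson of_nat_le_iff order_trans mult_right_mono zero_le_one)
  qed
  then show "\<epsilon> * real (card (verts B)) ^ 3 < vol (\<pi> u) (\<pi> v) (\<pi> w)"
    if "u \<in> verts G" "v \<in> verts G" "w \<in> verts G" "0 < n" for u v w
    unfolding vol_def card_B using bounds[OF that(1)] eps(2) that
    by (intro eps_volume_lt_product) (auto simp: k_def m_def)
qed

lemma blowup_map_equiv_of_same_major_part:
  assumes G: "is_3graph G" and B: "finite (verts B)" "blowup_map n G B f"
    and P: "finite_partition P (verts B)" "eps_regular_partition B \<epsilon> P" and "\<epsilon> < 1/2"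
    and major: "\<And>u. u \<in> verts G \<Longrightarrow> \<pi> u \<in> P \<and> fibre B f u \<inter> \<pi> u \<noteq> {}"
    and large: "\<And>u T. u \<in> verts G \<Longrightarrow> T \<in> P \<Longrightarrow> \<epsilon> * real (card T) \<le> real (card (fibre B f u \<inter> \<pi> u))"
    and bulky: "\<And>u v w. u \<in> verts G \<Longrightarrow> v \<in> verts G \<Longrightarrow> w \<in> verts G \<Longrightarrow>
      \<epsilon> * real (card (verts B)) ^ 3 < vol (\<pi> u) (\<pi> v) (\<pi> w)"
    and ab: "a \<in> verts G" "b \<in> verts G" "\<pi> a = \<pi> b"
  shows "hg_equiv G a b"
proof (rule ccontr)
  assume "\<not> hg_equiv G a b"
  then obtain w1 w2 where w: "w1 \<in> verts G" "w2 \<in> verts G" "w1 \<notin> {a, b}" "w2 \<notin> {a, b}" "w1 \<noteq> w2"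
    and differ: "{a, w1, w2} \<in> edges G \<longleftrightarrow> {b, w1, w2} \<notin> edges G"
    using not_hg_equivE[OF G] by metis
  have "\<not> eps_regular_triple B \<epsilon> (\<pi> a) (\<pi> w1) (\<pi> w2)"
    using ab w major[OF ab(1)] major[OF ab(2)] major[OF w(1)] major[OF w(2)] large[OF ab(1)] large[OF ab(2)]
      large[OF w(1)] large[OF w(2)]
    by (intro blowup_map_not_eps_regular_triple[OF B(2,1) w(3-5) differ, where Sa = "fibre B f a \<inter> \<pi> a"
          and Sb = "fibre B f b \<inter> \<pi> b" and Sc = "fibre B f w1 \<inter> \<pi> w1" and Sd = "fibre B f w2 \<inter> \<pi> w2"]
        \<open>\<epsilon> < 1/2\<close>) auto
  then have "vol (\<pi> a) (\<pi> w1) (\<pi> w2) \<le> \<epsilon> * real (card (verts B)) ^ 3"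
    using vol_le_of_not_eps_regular[OF P] major ab w by simp
  then show False
    using bulky[OF ab(1) w(1,2)] by simp
qed

lemma blowup_regular_partition_classifies:
  assumes G: "is_3graph G" and "is_blowup n G B" "n \<ge> 1"
    and P: "finite_partition P (verts B)" "eps_regular_partition B \<epsilon> P"
    and eps: "0 < \<epsilon>" "\<epsilon> < 1/2" "\<epsilon> * (real (card P) * real (card (verts G))) ^ 3 < 1"
  obtains \<pi> where "\<pi> ` verts G \<subseteq> P" "\<And>a b. a \<in> verts G \<Longrightarrow> b \<in> verts G \<Longrightarrow> \<pi> a = \<pi> b \<Longrightarrow> hg_equiv G a b"
proof -
  obtain f where B: "is_3graph B" "blowup_map n G B f"
    using assms(2) unfolding is_blowup_iff_blowup_map by blast
  have "finite (verts B)"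
    using B(1) unfolding is_3graph_def by blast
  obtain \<pi> where major: "\<And>u. u \<in> verts G \<Longrightarrow> \<pi> u \<in> P \<and> real n \<le> real (card (fibre B f u \<inter> \<pi> u)) * real (card P)"
    using blowup_map_major_parts[OF B(2) \<open>n \<ge> 1\<close> P(1)] by blast
  have nonempty: "\<pi> u \<in> P \<and> fibre B f u \<inter> \<pi> u \<noteq> {}" if "u \<in> verts G" for u
    using major[OF that] \<open>n \<ge> 1\<close> by (intro conjI notI) auto
  note large = blowup_map_major_parts_large[OF G \<open>finite (verts B)\<close> B(2) P(1) eps(1,3) major]
  show thesis
  proof (rule that)
    show "\<pi> ` verts G \<subseteq> P"
      using nonempty by blast
    show "hg_equiv G a b" if "a \<in> verts G" "b \<in> verts G" "\<pi> a = \<pi> b" for a b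
      using large(2) \<open>n \<ge> 1\<close>
      by (intro blowup_map_equiv_of_same_major_part[OF G \<open>finite (verts B)\<close> B(2) P eps(2) nonempty large(1)
            _ that]) simp_all
  qed
qed

lemma card_le_double_of_equiv_classifier:
  assumes "irreducible G" "finite (verts G)" "A \<subseteq> verts G" "finite P" "\<pi> ` A \<subseteq> P"
    and classifies: "\<And>a b. a \<in> A \<Longrightarrow> b \<in> A \<Longrightarrow> \<pi> a = \<pi> b \<Longrightarrow> hg_equiv G a b"
  shows "card A \<le> 2 * card P"
proof -
  have "card {a \<in> A. \<pi> a = X} \<le> 2" for X
  proof (cases "{a \<in> A. \<pi> a = X} = {}")
    case False
    then obtain a0 where "a0 \<in> A" "\<pi> a0 = X" by blast
    then have "{a \<in> A. \<pi> a = X} \<subseteq> {y \<in> verts G. hg_equiv G a0 y}"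
      using classifies \<open>A \<subseteq> verts G\<close> by auto
    then have "card {a \<in> A. \<pi> a = X} \<le> card {y \<in> verts G. hg_equiv G a0 y}"
      using \<open>finite (verts G)\<close> by (intro card_mono) auto
    also have "\<dots> \<le> 2"
      using \<open>irreducible G\<close> \<open>a0 \<in> A\<close> \<open>A \<subseteq> verts G\<close> unfolding irreducible_def by blast
    finally show ?thesis .
  next
    case True
    then show ?thesis
      unfolding True by simp
  qed
  moreover have "A = (\<Union>X\<in>P. {a \<in> A. \<pi> a = X})"
    using \<open>\<pi> ` A \<subseteq> P\<close> by blast
  then have "card A \<le> (\<Sum>X\<in>P. card {a \<in> A. \<pi> a = X})"
    using card_UN_le[OF \<open>finite P\<close>, of "\<lambda>X. {a \<in> A. \<pi> a = X}"] by simp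
  ultimately show ?thesis
    using sum_mono[of P "\<lambda>X. card {a \<in> A. \<pi> a = X}" "\<lambda>_. 2"] by simp
qed

lemma ex_equiv_witness_closure:
  assumes "A \<subseteq> verts G" "finite A"
  obtains U where "A \<subseteq> U" "U \<subseteq> verts G" "card U \<le> card A + 2 * card A ^ 2"
    "\<And>a b. a \<in> A \<Longrightarrow> b \<in> A \<Longrightarrow> hg_equiv (induced_sub G U) a b \<Longrightarrow> hg_equiv G a b"
proof -
  have "\<forall>a\<in>A. \<forall>b\<in>A. \<exists>w1 w2. w1 \<in> verts G \<and> w2 \<in> verts G \<and> (\<not> hg_equiv G a b \<longrightarrow>
      w1 \<notin> {a, b} \<and> w2 \<notin> {a, b} \<and> ({a, w1, w2} \<in> edges G \<longleftrightarrow> {b, w1, w2} \<notin> edges G))"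
    using \<open>A \<subseteq> verts G\<close> unfolding hg_equiv_def by blast
  then obtain w1 w2 where w: "\<And>a b. a \<in> A \<Longrightarrow> b \<in> A \<Longrightarrow> w1 a b \<in> verts G \<and> w2 a b \<in> verts G \<and>
      (\<not> hg_equiv G a b \<longrightarrow> w1 a b \<notin> {a, b} \<and> w2 a b \<notin> {a, b}
        \<and> ({a, w1 a b, w2 a b} \<in> edges G \<longleftrightarrow> {b, w1 a b, w2 a b} \<notin> edges G))"
    by metis
  define U where "U = A \<union> (\<Union>a\<in>A. \<Union>b\<in>A. {w1 a b, w2 a b})"
  have "card U \<le> card A + (\<Sum>a\<in>A. \<Sum>b\<in>A. card {w1 a b, w2 a b})"
    unfolding U_def using \<open>finite A\<close>
    by (intro order_trans[OF card_Un_le] add_mono order_trans[OF card_UN_le] sum_mono) auto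
  also have "\<dots> \<le> card A + (\<Sum>a\<in>A. \<Sum>b\<in>A. 2)"
    by (intro add_mono sum_mono) (auto simp: card_insert_le_m1)
  finally have "card U \<le> card A + 2 * card A ^ 2"
    by (simp add: power2_eq_square)
  moreover have "A \<subseteq> U" "U \<subseteq> verts G"
    unfolding U_def using \<open>A \<subseteq> verts G\<close> w by auto
  moreover have "hg_equiv G a b" if "a \<in> A" "b \<in> A" "hg_equiv (induced_sub G U) a b" for a b
  proof (rule ccontr)
    assume "\<not> hg_equiv G a b"
    then have "w1 a b \<in> U - {a, b}" "w2 a b \<in> U - {a, b}"
      "{a, w1 a b, w2 a b} \<in> edges G \<longleftrightarrow> {b, w1 a b, w2 a b} \<notin> edges G"
      using w[OF that(1,2)] that(1,2) unfolding U_def by auto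
    moreover have "{a, w1 a b, w2 a b} \<subseteq> U" "{b, w1 a b, w2 a b} \<subseteq> U"
      using \<open>A \<subseteq> U\<close> that(1,2) calculation(1,2) by auto
    ultimately show False
      using that(3) unfolding hg_equiv_def by auto
  qed
  ultimately show thesis
    using that by blast
qed

lemma eps_cube_lt_1:
  fixes k u K :: nat and \<epsilon> :: real
  assumes "k < K" "u \<le> 2 * K + 8 * K^2" "1000 * real K ^ 9 * \<epsilon> \<le> 1" "0 < \<epsilon>"
  shows "\<epsilon> * (real k * real u) ^ 3 < 1"
proof -
  have "K \<le> K^2"
    using assms(1) by (simp add: power2_eq_square)
  then have "u \<le> 10 * K^2"
    using assms(2) by linarith
  then have "real u \<le> 10 * real K ^ 2"
    by (metis of_nat_le_iff of_nat_mult of_nat_numeral of_nat_power)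
  then have "real k * real u \<le> real k * (10 * real K ^ 2)"
    by (intro mult_left_mono) auto
  also have "\<dots> < real K * (10 * real K ^ 2)"
    using assms(1) by (intro mult_strict_right_mono) auto
  finally have "(real k * real u) ^ 3 < (10 * real K ^ 3) ^ 3"
    by (intro power_strict_mono) (simp_all add: power2_eq_square power3_eq_cube)
  also have "\<dots> = 1000 * real K ^ 9"
    by (simp add: power_mult_distrib power_mult[symmetric])
  finally have "\<epsilon> * (real k * real u) ^ 3 < \<epsilon> * (1000 * real K ^ 9)"
    using assms(4) by (intro mult_strict_left_mono)
  then show ?thesis
    using assms(3) by (simp add: mult_ac)
qed

section \<open>The lower bound\<close>

lemma card_verts_is_blowup:
  assumes "is_blowup n G B" "finite (verts G)"
  shows "card (verts B) = card (verts G) * n"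
  using assms card_verts_blowup_map unfolding is_blowup_iff_blowup_map is_3graph_def by blast

lemma is_3graph_induced_sub: "is_3graph G \<Longrightarrow> U \<subseteq> verts G \<Longrightarrow> is_3graph (induced_sub G U)"
  unfolding is_3graph_def by (auto intro: finite_subset)

lemma regular_partition_of_blowup_of_induced_sub:
  assumes H: "hereditary H" and G: "G \<in> B_set H" and U: "U \<subseteq> verts G" "U \<noteq> {}"
    and bound: "bound_works eps_regular_partition H \<epsilon> M"
  obtains n B P where "n \<ge> 1" "is_blowup n (induced_sub G U) B"
    "finite_partition P (verts B)" "card P \<le> M" "eps_regular_partition B \<epsilon> P"
proof -
  obtain N where N: "\<forall>B\<in>H. N \<le> card (verts B) \<longrightarrow>
      (\<exists>P. is_partition P (verts B) \<and> card P \<le> M \<and> eps_regular_partition B \<epsilon> P)"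
    using bound unfolding bound_works_def by blast
  define n where "n = max N 1"
  have "\<forall>n\<ge>1. \<exists>B\<in>H. is_blowup n G B"
    using G unfolding B_set_def by blast
  moreover have "n \<ge> 1"
    unfolding n_def by simp
  ultimately obtain B0 where "B0 \<in> H" "is_blowup n G B0"
    by blast
  then obtain W where "W \<subseteq> verts B0" and blowup: "is_blowup n (induced_sub G U) (induced_sub B0 W)"
    using is_blowup_induced_sub U(1) by metis
  have "finite U"
    using G U(1) finite_subset unfolding B_set_def is_3graph_def by blast
  then have "1 \<le> card U"
    using U(2) by (simp add: Suc_le_eq card_gt_0_iff)
  then have "N \<le> card U * n"
    unfolding n_def by (metis max.cobounded1 mult_1 mult_le_mono1 order_trans)
  then have "N \<le> card (verts (induced_sub B0 W))"
    using card_verts_is_blowup[OF blowup] \<open>finite U\<close> by simp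
  moreover have "induced_sub B0 W \<in> H"
    using H \<open>B0 \<in> H\<close> \<open>W \<subseteq> verts B0\<close> unfolding hereditary_def by blast
  ultimately obtain P where "is_partition P (verts (induced_sub B0 W))" "card P \<le> M"
    "eps_regular_partition (induced_sub B0 W) \<epsilon> P"
    using N by blast
  moreover have "finite (verts (induced_sub B0 W))"
    using blowup unfolding is_blowup_def is_3graph_def by blast
  ultimately show thesis
    using that[of n "induced_sub B0 W" P] blowup \<open>n \<ge> 1\<close> unfolding finite_partition_def by simp
qed

lemma regular_bound_ge_of_B_set:
  assumes H: "hereditary H" and G: "G \<in> B_set H" and "2 * K \<le> card (verts G)"
    and eps: "0 < \<epsilon>" "\<epsilon> < 1/2" "1000 * real K ^ 9 * \<epsilon> \<le> 1"
    and bound: "bound_works eps_regular_partition H \<epsilon> M"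
  shows "K \<le> M"
proof (rule ccontr)
  assume "\<not> K \<le> M"
  have G3: "is_3graph G" and "irreducible G"
    using G unfolding B_set_def by blast+
  then have "finite (verts G)"
    unfolding is_3graph_def by blast
  obtain A where A: "A \<subseteq> verts G" "card A = 2 * K"
    using obtain_subset_with_card_n[OF \<open>2 * K \<le> card (verts G)\<close>] by metis
  then have "finite A"
    using \<open>finite (verts G)\<close> finite_subset by blast
  obtain U where U: "A \<subseteq> U" "U \<subseteq> verts G" "card U \<le> card A + 2 * card A ^ 2"
    and closure: "\<And>a b. a \<in> A \<Longrightarrow> b \<in> A \<Longrightarrow> hg_equiv (induced_sub G U) a b \<Longrightarrow> hg_equiv G a b"
    using ex_equiv_witness_closure[OF A(1) \<open>finite A\<close>] by blast
  have "card U \<le> 2 * K + 8 * K ^ 2"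
    using U(3) A(2) by (simp add: power2_eq_square)
  have "A \<noteq> {}"
    using A(2) \<open>\<not> K \<le> M\<close> by auto
  then obtain n B P where blowup: "n \<ge> 1" "is_blowup n (induced_sub G U) B"
    and P: "finite_partition P (verts B)" "card P \<le> M" "eps_regular_partition B \<epsilon> P"
    using regular_partition_of_blowup_of_induced_sub[OF H G U(2) _ bound] U(1) by blast
  have "\<epsilon> * (real (card P) * real (card (verts (induced_sub G U)))) ^ 3 < 1"
    using eps_cube_lt_1[of "card P" K "card U"] P(2) \<open>\<not> K \<le> M\<close> \<open>card U \<le> 2 * K + 8 * K ^ 2\<close> eps
    by simp
  then obtain \<pi> where "\<pi> ` verts (induced_sub G U) \<subseteq> P"
    and classifies: "\<And>a b. a \<in> verts (induced_sub G U) \<Longrightarrow> b \<in> verts (induced_sub G U) \<Longrightarrow> \<pi> a = \<pi> b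
      \<Longrightarrow> hg_equiv (induced_sub G U) a b"
    by (rule blowup_regular_partition_classifies[OF is_3graph_induced_sub[OF G3 U(2)] blowup(2,1) P(1,3) eps(1,2)])
      (rule that)
  have "\<pi> ` A \<subseteq> P"
    using \<open>\<pi> ` verts (induced_sub G U) \<subseteq> P\<close> U(1) by auto
  moreover have "hg_equiv G a b" if "a \<in> A" "b \<in> A" "\<pi> a = \<pi> b" for a b
    using closure[OF that(1,2)] classifies[of a b] that U(1) by auto
  ultimately have "card A \<le> 2 * card P"
    by (rule card_le_double_of_equiv_classifier[OF \<open>irreducible G\<close> \<open>finite (verts G)\<close> A(1)
        finite_partitionD(2)[OF P(1)]])
  then show False
    using A(2) P(2) \<open>\<not> K \<le> M\<close> by linarith
qed

lemma eps_powr_bound: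
  fixes \<epsilon> :: real
  assumes "0 < \<epsilon>" "\<epsilon> < 1 / 2^40"
  shows "1000 * real (nat \<lceil>\<epsilon> powr (-(1/20))\<rceil>) ^ 9 * \<epsilon> \<le> 1"
proof -
  define x where "x = \<epsilon> powr (-(1/20))"
  have "0 < x"
    unfolding x_def using assms by simp
  have "x ^ 20 = x powr 20"
    using \<open>0 < x\<close> by (simp add: powr_realpow)
  also have "\<dots> = 1 / \<epsilon>"
    unfolding x_def powr_powr using assms by (simp add: powr_minus_divide)
  finally have x20: "x ^ 20 = 1 / \<epsilon>" .
  have "(4::real) ^ 20 < 1 / \<epsilon>"
    using assms by (simp add: field_simps)
  then have "4 < x"
    using power_less_imp_less_base[of 4 20 x] \<open>0 < x\<close> unfolding x20 by simp
  have "real (nat \<lceil>x\<rceil>) \<le> 2 * x"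
    using \<open>4 < x\<close> by linarith
  then have "1000 * real (nat \<lceil>x\<rceil>) ^ 9 * \<epsilon> \<le> 1000 * (2 * x) ^ 9 * \<epsilon>"
    using assms(1) by (intro mult_right_mono mult_left_mono power_mono) auto
  also have "\<dots> = 512000 / x ^ 11"
  proof -
    have "x ^ 9 * \<epsilon> * x ^ 11 = 1"
      using x20 assms(1) by (simp add: power_add[symmetric] mult_ac)
    then show ?thesis
      using \<open>0 < x\<close> by (simp add: power_mult_distrib field_simps)
  qed
  also have "\<dots> \<le> 1"
    using power_mono[of 4 x 11] \<open>4 < x\<close> by simp
  finally show ?thesis
    unfolding x_def .
qed

lemma powr_le_M_reg:
  assumes H: "hereditary H" and S: "infinite S" "S \<subseteq> B_set H" "\<forall>G\<in>S. \<forall>G'\<in>S. G \<noteq> G' \<longrightarrow> \<not> hg_iso G G'"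
    and eps: "0 < \<epsilon>" "\<epsilon> < 1 / 2^40"
  shows "\<epsilon> powr (-(1/20)) \<le> real (M_reg H \<epsilon>)"
proof -
  define K where "K = nat \<lceil>\<epsilon> powr (-(1/20))\<rceil>"
  obtain G where "G \<in> S" "2 * K \<le> card (verts G)"
    using ex_large_of_infinite_non_isomorphic[OF S(1) _ S(3)] S(2) unfolding B_set_def by blast
  then have "K \<le> M_reg H \<epsilon>"
    using regular_bound_ge_of_B_set[OF H] bound_works_M_reg[OF H] eps_powr_bound[OF eps] S(2) eps
    unfolding K_def by fastforce
  then show ?thesis
    unfolding K_def by (meson of_nat_le_iff order_trans real_nat_ceiling_ge)
qed

theorem theorem7p5:
  assumes "hereditary H"
    and "\<exists>S. infinite S \<and> S \<subseteq> B_set H \<and> (\<forall>G\<in>S. \<forall>G'\<in>S. G \<noteq> G' \<longrightarrow> \<not> hg_iso G G')"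
  shows "(\<exists>C>0. \<exists>\<epsilon>0>0. \<forall>\<epsilon>. 0 < \<epsilon> \<and> \<epsilon> < \<epsilon>0 \<longrightarrow> \<epsilon> powr (-C) \<le> real (M_reg H \<epsilon>))
       \<and> (M_hom_defined H \<longrightarrow> (\<forall>\<epsilon>>0. M_reg H \<epsilon> \<le> M_hom H (\<epsilon> ^ 4)))"
proof
  obtain S where "infinite S" "S \<subseteq> B_set H" "\<forall>G\<in>S. \<forall>G'\<in>S. G \<noteq> G' \<longrightarrow> \<not> hg_iso G G'"
    using assms(2) by blast
  then show "\<exists>C>0. \<exists>\<epsilon>0>0. \<forall>\<epsilon>. 0 < \<epsilon> \<and> \<epsilon> < \<epsilon>0 \<longrightarrow> \<epsilon> powr (-C) \<le> real (M_reg H \<epsilon>)"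
    using powr_le_M_reg[OF assms(1)] by (intro exI[of _ "1/20"] conjI exI[of _ "1 / 2^40"]) auto
next
  show "M_hom_defined H \<longrightarrow> (\<forall>\<epsilon>>0. M_reg H \<epsilon> \<le> M_hom H (\<epsilon> ^ 4))"
    using M_reg_le_M_hom[OF assms(1)] by blast
qed

end
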